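(* Let $X$ be a topological graph. The following statements are equivalent: (1) $X$ is homeomorphic to the unit circle $\mathbb{S}^1$; (2) $P_h(X)=\{0,1,2,\ldots\}\cup\{+\infty\}$; (3) $0\in P_h(X)$; (4) all vertices of $X$ have degree $2$.
   Context: A topological graph is a compact connected metric space $X$ which is a finite union of arcs (spaces homeomorphic to $[0,1]$; the points corresponding to $0,1$ are the end points) such that any two of these arcs intersect in at most their end points; the vertices of $X$ are the end points of these arcs (edges), and the degree of a vertex is the number of edges having it as an end point. $\mathbb{S}^1=\{e^{2\pi i\theta}:\theta\in[0,1]\}$. For a topological space $A$, $Homeo(A)$ denotes the group of all homeomorphisms $A\to A$ under composition. For a subgroup $G$ of $Homeo(A)$ (acting by $gx=g(x)$), a nonempty subset $Y\subseteq A$ is invariant if $g(y)\in Y$ for all $g\in G$, $y\in Y$. The height of $(G,A)$ is $h(G,A)=\sup\{n\geq 0:$ there exist distinct closed invariant subsets $Y_0\subset Y_1\subset\cdots\subset Y_n=A\}$ (possibly $+\infty$). Finally $P_h(A)=\{h(G,A): G \text{ is a subgroup of } Homeo(A)\}$. *)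

theory Defs
  imports "HOL-Analysis.Analysis" "HOL-Library.Extended_Nat"
begin

definition ends :: "(real \<Rightarrow> 'a::topological_space) \<Rightarrow> 'a set" where
  "ends e = {pathstart e, pathfinish e}"

definition topological_graph :: "'a::metric_space set \<Rightarrow> (real \<Rightarrow> 'a) set \<Rightarrow> bool" where
  "topological_graph X E \<longleftrightarrow>
     compact X \<and> connected X \<and> finite E \<and> E \<noteq> {} \<and> (\<forall>e\<in>E. arc e) \<and>
     X = (\<Union>e\<in>E. path_image e) \<and>
     (\<forall>e1\<in>E. \<forall>e2\<in>E. e1 \<noteq> e2 \<longrightarrow>
         path_image e1 \<inter> path_image e2 \<subseteq> ends e1 \<inter> ends e2)"

definition graph_vertices :: "(real \<Rightarrow> 'a::topological_space) set \<Rightarrow> 'a set" where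
  "graph_vertices E = (\<Union>e\<in>E. ends e)"

definition graph_degree :: "(real \<Rightarrow> 'a::topological_space) set \<Rightarrow> 'a \<Rightarrow> nat" where
  "graph_degree E v = card {e\<in>E. v \<in> ends e}"

definition Homeo :: "'a::topological_space set \<Rightarrow> ('a \<Rightarrow> 'a) set" where
  "Homeo A = {f. (\<exists>g. homeomorphism A A f g) \<and> (\<forall>x. x \<notin> A \<longrightarrow> f x = x)}"

definition homeo_subgroup :: "('a::topological_space \<Rightarrow> 'a) set \<Rightarrow> 'a set \<Rightarrow> bool" where
  "homeo_subgroup G A \<longleftrightarrow> G \<subseteq> Homeo A \<and> id \<in> G \<and>
     (\<forall>f\<in>G. \<forall>g\<in>G. f \<circ> g \<in> G) \<and>
     (\<forall>f\<in>G. \<exists>h\<in>G. \<forall>x\<in>A. h (f x) = x)"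

definition invariant :: "('a \<Rightarrow> 'a) set \<Rightarrow> 'a set \<Rightarrow> 'a set \<Rightarrow> bool" where
  "invariant G A Y \<longleftrightarrow> Y \<noteq> {} \<and> Y \<subseteq> A \<and> (\<forall>g\<in>G. \<forall>y\<in>Y. g y \<in> Y)"

definition closed_invariant :: "('a::topological_space \<Rightarrow> 'a) set \<Rightarrow> 'a set \<Rightarrow> 'a set \<Rightarrow> bool" where
  "closed_invariant G A Y \<longleftrightarrow> invariant G A Y \<and> closedin (top_of_set A) Y"

definition height :: "('a::topological_space \<Rightarrow> 'a) set \<Rightarrow> 'a set \<Rightarrow> enat" where
  "height G A = Sup {enat n | n. \<exists>Y :: nat \<Rightarrow> 'a set.
      (\<forall>i\<le>n. closed_invariant G A (Y i)) \<and> (\<forall>i<n. Y i \<subset> Y (Suc i)) \<and> Y n = A}"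

definition P_h :: "'a::topological_space set \<Rightarrow> enat set" where
  "P_h A = {height G A | G. homeo_subgroup G A}"

end

theory Submission
  imports Defs
begin

text \<open>
  (1) \<Longrightarrow> (2): the height is a topological invariant (conjugate the group by the
  homeomorphism), and on the circle every value occurs. The full homeomorphism group is
  transitive, so it has height 0; the trivial group has the strict chains of finite sets, so
  it has height \<infinity>; and for N > 0 the stabiliser of a mirror-symmetric subdivision of the
  circle into 2N arcs has N+1 orbit representatives and a strict chain of N+1 closed
  invariant sets, so it has height N.

  (3) \<Longrightarrow> (4): call a point exceptional if three arcs start there and pairwise meet only
  there, or if not even two such arcs exist; homeomorphisms preserve exceptional points. In a
  graph they are vertices, and every vertex of degree \<noteq> 2 is exceptional; so if some degree
  is not 2 they form a finite, nonempty, proper closed invariant set and every group has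
  height at least 1.

  (4) \<Longrightarrow> (1): two edges through a vertex of degree 2 merge into a single arc without
  changing the other degrees; by induction on the number of edges we reach two edges with the
  same ends, which form a simple closed curve.
\<close>

section \<open>Groups of homeomorphisms and their height\<close>

lemma HomeoE:
  assumes "f \<in> Homeo A"
  obtains g where "homeomorphism A A f g" "\<And>x. x \<notin> A \<Longrightarrow> f x = x"
  using assms unfolding Homeo_def by blast

lemma Homeo_image: "f \<in> Homeo A \<Longrightarrow> f ` A = A"
  by (metis HomeoE homeomorphism_image1)

lemma Homeo_mem: "f \<in> Homeo A \<Longrightarrow> x \<in> A \<Longrightarrow> f x \<in> A"
  using Homeo_image by blast

lemma Homeo_id: "id \<in> Homeo A"
  unfolding Homeo_def id_def using homeomorphism_ident by fastforce

lemma Homeo_comp: "f \<in> Homeo A \<Longrightarrow> g \<in> Homeo A \<Longrightarrow> f \<circ> g \<in> Homeo A"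
proof -
  assume f: "f \<in> Homeo A" and g: "g \<in> Homeo A"
  obtain f' where f': "homeomorphism A A f f'" "\<And>x. x \<notin> A \<Longrightarrow> f x = x" using HomeoE[OF f] by blast
  obtain g' where g': "homeomorphism A A g g'" "\<And>x. x \<notin> A \<Longrightarrow> g x = x" using HomeoE[OF g] by blast
  have "homeomorphism A A (f \<circ> g) (g' \<circ> f')" using homeomorphism_compose[OF g'(1) f'(1)] .
  then show ?thesis unfolding Homeo_def using f'(2) g'(2) by auto
qed

lemma Homeo_inverseE:
  assumes "f \<in> Homeo A"
  obtains g where "g \<in> Homeo A" "\<And>x. x \<in> A \<Longrightarrow> g (f x) = x" "\<And>x. x \<in> A \<Longrightarrow> f (g x) = x"
proof -
  obtain f' where f': "homeomorphism A A f f'" "\<And>x. x \<notin> A \<Longrightarrow> f x = x" using HomeoE[OF assms] by blast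
  define g where "g = (\<lambda>x. if x \<in> A then f' x else x)"
  have "homeomorphism A A g f"
    by (rule homeomorphism_cong[OF homeomorphism_symD[OF f'(1)]]) (auto simp: g_def)
  then have "g \<in> Homeo A" unfolding Homeo_def by (auto simp: g_def)
  moreover have "\<And>x. x \<in> A \<Longrightarrow> g (f x) = x" "\<And>x. x \<in> A \<Longrightarrow> f (g x) = x"
    using f'(1) unfolding homeomorphism_def g_def by auto
  ultimately show ?thesis using that by blast
qed

definition stabilizer :: "'a::topological_space set \<Rightarrow> 'a set set \<Rightarrow> ('a \<Rightarrow> 'a) set" where
  "stabilizer A S = {f \<in> Homeo A. \<forall>T\<in>S. f ` T = T}"

lemma homeo_subgroup_stabilizer:
  assumes "\<And>T. T \<in> S \<Longrightarrow> T \<subseteq> A"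
  shows "homeo_subgroup (stabilizer A S) A"
  unfolding homeo_subgroup_def
proof (intro conjI ballI)
  show "stabilizer A S \<subseteq> Homeo A" unfolding stabilizer_def by auto
  show "id \<in> stabilizer A S" unfolding stabilizer_def using Homeo_id by auto
next
  fix f g assume "f \<in> stabilizer A S" "g \<in> stabilizer A S"
  then show "f \<circ> g \<in> stabilizer A S" unfolding stabilizer_def using Homeo_comp by (auto simp del: o_apply simp add: image_comp[symmetric])
next
  fix f assume f: "f \<in> stabilizer A S"
  then have fH: "f \<in> Homeo A" unfolding stabilizer_def by auto
  obtain g where g: "g \<in> Homeo A" "\<And>x. x \<in> A \<Longrightarrow> g (f x) = x" using Homeo_inverseE[OF fH] by blast
  have "g ` T = T" if "T \<in> S" for T
  proof -
    have "f ` T = T" using f that unfolding stabilizer_def by auto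
    then have "g ` T = g ` f ` T" by simp
    also have "\<dots> = T" using g(2) assms[OF that] by (force simp: image_comp)
    finally show ?thesis .
  qed
  then have "g \<in> stabilizer A S" using g(1) unfolding stabilizer_def by auto
  then show "\<exists>h\<in>stabilizer A S. \<forall>x\<in>A. h (f x) = x" using g(2) by blast
qed

lemma invariant_stabilizerI:
  assumes "Y \<noteq> {}" "Y \<subseteq> A" "\<And>y. y \<in> Y \<Longrightarrow> \<exists>T\<in>S. y \<in> T \<and> T \<subseteq> Y"
  shows "invariant (stabilizer A S) A Y"
  unfolding invariant_def
proof (intro conjI ballI)
  fix g y assume g: "g \<in> stabilizer A S" and y: "y \<in> Y"
  obtain T where T: "T \<in> S" "y \<in> T" "T \<subseteq> Y" using assms(3)[OF y] by blast
  have "g ` T = T" using g T unfolding stabilizer_def by auto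
  then show "g y \<in> Y" using T by blast
qed (use assms in auto)

lemma height_ge_chain:
  assumes "\<forall>i\<le>n. closed_invariant G A (Y i)" "\<forall>i<n. Y i \<subset> Y (Suc i)" "Y n = A"
  shows "enat n \<le> height G A"
  unfolding height_def by (rule Sup_upper) (use assms in blast)

lemma invariant_orbit_iff:
  assumes G: "homeo_subgroup G A" and Y: "invariant G A Y" and g: "g \<in> G" and r: "r \<in> A"
  shows "g r \<in> Y \<longleftrightarrow> r \<in> Y"
proof
  obtain h where "h \<in> G" "\<forall>x\<in>A. h (g x) = x" using G g unfolding homeo_subgroup_def by blast
  then show "g r \<in> Y \<Longrightarrow> r \<in> Y" using Y r unfolding invariant_def by metis
qed (use Y g in \<open>auto simp: invariant_def\<close>)

lemma height_le_orbit_representatives: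
  assumes G: "homeo_subgroup G A" and R: "finite R" "R \<subseteq> A"
    and orb: "\<And>a. a \<in> A \<Longrightarrow> \<exists>r\<in>R. \<exists>g\<in>G. g r = a"
  shows "height G A \<le> enat (card R - 1)"
  unfolding height_def
proof (rule Sup_least)
  fix x assume "x \<in> {enat n | n. \<exists>Y :: nat \<Rightarrow> 'a set.
      (\<forall>i\<le>n. closed_invariant G A (Y i)) \<and> (\<forall>i<n. Y i \<subset> Y (Suc i)) \<and> Y n = A}"
  then obtain n Y where x: "x = enat n" and inv: "\<And>i. i \<le> n \<Longrightarrow> invariant G A (Y i)"
    and ch: "\<forall>i<n. Y i \<subset> Y (Suc i)" unfolding closed_invariant_def by blast
  have meets: "R \<inter> Y i \<noteq> {}" if i: "i \<le> n" for i
  proof -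
    obtain a where "a \<in> Y i" "a \<in> A" using inv[OF i] unfolding invariant_def by blast
    then show ?thesis using orb invariant_orbit_iff[OF G inv[OF i]] R(2) by blast
  qed
  have grows: "R \<inter> Y i \<subset> R \<inter> Y (Suc i)" if i: "i < n" for i
  proof -
    obtain a where a: "a \<in> Y (Suc i)" "a \<notin> Y i" using ch i by blast
    then have "a \<in> A" using inv[of "Suc i"] i unfolding invariant_def by auto
    then obtain r g where rg: "r \<in> R" "g \<in> G" "g r = a" using orb by blast
    then have "r \<in> Y (Suc i)" "r \<notin> Y i"
      using a invariant_orbit_iff[OF G inv] R(2) i by (metis Suc_leI less_imp_le subsetD)+
    then show ?thesis using ch i rg(1) by blast
  qed
  have "i + 1 \<le> card (R \<inter> Y i)" if "i \<le> n" for i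
    using that
  proof (induction i)
    case 0
    then show ?case using meets[of 0] R by (simp add: card_gt_0_iff Suc_leI)
  next
    case (Suc i)
    then have "card (R \<inter> Y i) < card (R \<inter> Y (Suc i))"
      using grows[of i] R by (intro psubset_card_mono) auto
    then show ?case using Suc by simp
  qed
  then have "n + 1 \<le> card R" using card_mono[OF R(1), of "R \<inter> Y n"] by fastforce
  then show "x \<le> enat (card R - 1)" using x by simp
qed

lemma homeo_subgroup_trivial: "homeo_subgroup {id} A"
  by (auto simp: homeo_subgroup_def Homeo_id)

lemma height_trivial_group_infinite:
  fixes A :: "'a::t1_space set"
  assumes "infinite A"
  shows "height {id} A = \<infinity>"
proof -
  obtain q :: "nat \<Rightarrow> 'a" where q: "inj q" "range q \<subseteq> A"
    using infinite_countable_subset[OF assms] by blast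
  have ge: "enat n \<le> height {id} A" for n
  proof (rule height_ge_chain)
    define Y where "Y = (\<lambda>i. if i < n then q ` {..i} else A)"
    have "closed_invariant {id} A (Y i)" for i
    proof (cases "i < n")
      case True
      then have "finite (Y i)" "Y i \<subseteq> A" "Y i \<noteq> {}" using q by (auto simp: Y_def)
      then show ?thesis unfolding closed_invariant_def invariant_def
        by (auto intro: closed_subset finite_imp_closed)
    next
      case False
      then show ?thesis using assms unfolding closed_invariant_def invariant_def Y_def by auto
    qed
    then show "\<forall>i\<le>n. closed_invariant {id} A (Y i)" by blast
    show "\<forall>i<n. Y i \<subset> Y (Suc i)"
    proof (intro allI impI)
      fix i assume "i < n"
      have "q (Suc i) \<notin> q ` {..i}" using q(1) by (auto dest: injD)
      then have "q (Suc i) \<in> Y (Suc i)" "q (Suc i) \<notin> Y i" using q(2) \<open>i < n\<close> by (auto simp: Y_def)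
      moreover have "Y i \<subseteq> Y (Suc i)" using q(2) by (auto simp: Y_def)
      ultimately show "Y i \<subset> Y (Suc i)" by blast
    qed
    show "Y n = A" by (simp add: Y_def)
  qed
  show ?thesis
  proof (cases "height {id} A")
    case (enat m)
    then show ?thesis using ge[of "Suc m"] by simp
  qed simp
qed

lemma height_transitive:
  assumes G: "homeo_subgroup G A" and a: "a \<in> A" and trans: "\<And>x. x \<in> A \<Longrightarrow> \<exists>g\<in>G. g a = x"
  shows "height G A = 0"
proof -
  have "height G A \<le> enat (card {a} - 1)"
    by (rule height_le_orbit_representatives[OF G]) (use a trans in auto)
  then have "height G A \<le> 0" by (simp add: zero_enat_def)
  then show ?thesis by simp
qed

lemma height_pos_if_proper_closed_invariant:
  assumes G: "homeo_subgroup G A" and Y: "closed_invariant G A Y" "Y \<noteq> A"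
  shows "0 < height G A"
proof -
  have "\<forall>g\<in>G. \<forall>x\<in>A. g x \<in> A" using G Homeo_mem unfolding homeo_subgroup_def by blast
  moreover have "Y \<noteq> {}" "Y \<subseteq> A" using Y(1) unfolding closed_invariant_def invariant_def by auto
  ultimately have A: "closed_invariant G A A" and YA: "Y \<subset> A"
    using Y(2) unfolding closed_invariant_def invariant_def by auto
  have "enat 1 \<le> height G A"
  proof (rule height_ge_chain[of 1 G A "\<lambda>i. if i = 0 then Y else A"])
    show "\<forall>i\<le>1. closed_invariant G A (if i = 0 then Y else A)"
      using Y(1) A by (simp add: le_Suc_eq)
  qed (use YA in simp_all)
  then have "1 \<le> height G A" by (simp add: one_enat_def)
  then show ?thesis by (rule order.strict_trans2[OF zero_less_one])
qed

lemma homeo_subgroup_Homeo: "homeo_subgroup (Homeo A) A"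
  using homeo_subgroup_stabilizer[of "{}" A] by (simp add: stabilizer_def)

definition conj_homeo :: "('a \<Rightarrow> 'b) \<Rightarrow> ('b \<Rightarrow> 'a) \<Rightarrow> 'a set \<Rightarrow> ('b \<Rightarrow> 'b) \<Rightarrow> ('a \<Rightarrow> 'a)" where
  "conj_homeo \<phi> \<psi> X f = (\<lambda>x. if x \<in> X then \<psi> (f (\<phi> x)) else x)"

lemma Homeo_conj_homeo:
  assumes hom: "homeomorphism X S \<phi> \<psi>" and f: "f \<in> Homeo S"
  shows "conj_homeo \<phi> \<psi> X f \<in> Homeo X"
proof -
  obtain f' where f': "homeomorphism S S f f'" using HomeoE[OF f] by blast
  have "homeomorphism X X (\<psi> \<circ> (f \<circ> \<phi>)) ((\<phi>' \<circ> f') \<circ> \<phi>)" if "\<phi>' = \<psi>" for \<phi>'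
    using homeomorphism_compose[OF homeomorphism_compose[OF hom f'] homeomorphism_symD[OF hom]] that
    by (simp add: comp_assoc)
  then have "homeomorphism X X (conj_homeo \<phi> \<psi> X f) (conj_homeo \<phi> \<psi> X f')"
    by (rule homeomorphism_cong[OF _ refl refl]) (auto simp: conj_homeo_def)
  then show ?thesis unfolding Homeo_def conj_homeo_def by auto
qed

section \<open>Invariance of the height under homeomorphisms\<close>

lemma height_le_by_map:
  assumes inj: "inj_on \<phi> A" and img: "\<phi> ` A = B"
    and ci: "\<And>Y. closed_invariant G A Y \<Longrightarrow> closed_invariant H B (\<phi> ` Y)"
  shows "height G A \<le> height H B"
proof (unfold height_def[of G A], rule Sup_least)
  fix x assume "x \<in> {enat n | n. \<exists>Y :: nat \<Rightarrow> 'a set.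
      (\<forall>i\<le>n. closed_invariant G A (Y i)) \<and> (\<forall>i<n. Y i \<subset> Y (Suc i)) \<and> Y n = A}"
  then obtain n Y where x: "x = enat n" and Y: "\<forall>i\<le>n. closed_invariant G A (Y i)"
    "\<forall>i<n. Y i \<subset> Y (Suc i)" "Y n = A" by blast
  have "Y i \<subseteq> A" if "i \<le> n" for i
    using Y(1) that unfolding closed_invariant_def invariant_def by blast
  then have "\<forall>i<n. \<phi> ` Y i \<subset> \<phi> ` Y (Suc i)"
    using Y(2) by (metis Suc_leI inj image_strict_mono inj_on_subset)
  moreover have "\<forall>i\<le>n. closed_invariant H B (\<phi> ` Y i)" using Y(1) ci by blast
  ultimately show "x \<le> height H B"
    unfolding x using height_ge_chain[of n H B "\<lambda>i. \<phi> ` Y i"] Y(3) img by blast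
qed

context
  fixes X :: "'a::topological_space set" and S :: "'b::topological_space set"
    and \<phi> \<psi> and G :: "('b \<Rightarrow> 'b) set"
  assumes hom: "homeomorphism X S \<phi> \<psi>" and G: "homeo_subgroup G S"
begin

private lemma conj_homeo_facts:
  "\<And>x. x \<in> X \<Longrightarrow> \<phi> x \<in> S" "\<And>y. y \<in> S \<Longrightarrow> \<psi> y \<in> X"
  "\<And>x. x \<in> X \<Longrightarrow> \<psi> (\<phi> x) = x" "\<And>y. y \<in> S \<Longrightarrow> \<phi> (\<psi> y) = y"
  "\<And>f y. f \<in> G \<Longrightarrow> y \<in> S \<Longrightarrow> f y \<in> S"
  using hom G Homeo_mem unfolding homeomorphism_def homeo_subgroup_def by blast+

lemma homeo_subgroup_conj_homeo: "homeo_subgroup (conj_homeo \<phi> \<psi> X ` G) X"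
  unfolding homeo_subgroup_def
proof (intro conjI ballI)
  let ?c = "conj_homeo \<phi> \<psi> X"
  show "?c ` G \<subseteq> Homeo X" using Homeo_conj_homeo[OF hom] G unfolding homeo_subgroup_def by blast
  have "?c id = id" by (rule ext) (simp add: conj_homeo_def conj_homeo_facts)
  then show "id \<in> ?c ` G" using G unfolding homeo_subgroup_def by (metis image_eqI)
next
  let ?c = "conj_homeo \<phi> \<psi> X"
  fix f g assume "f \<in> ?c ` G" "g \<in> ?c ` G"
  then obtain f0 g0 where fg: "f0 \<in> G" "g0 \<in> G" "f = ?c f0" "g = ?c g0" by blast
  have "f \<circ> g = ?c (f0 \<circ> g0)" using fg by (auto simp: conj_homeo_def conj_homeo_facts)
  moreover have "f0 \<circ> g0 \<in> G" using G fg unfolding homeo_subgroup_def by blast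
  ultimately show "f \<circ> g \<in> ?c ` G" by blast
next
  let ?c = "conj_homeo \<phi> \<psi> X"
  fix f assume "f \<in> ?c ` G"
  then obtain f0 where f0: "f0 \<in> G" "f = ?c f0" by blast
  obtain h0 where h0: "h0 \<in> G" "\<forall>x\<in>S. h0 (f0 x) = x"
    using G f0 unfolding homeo_subgroup_def by blast
  have "\<forall>x\<in>X. ?c h0 (f x) = x" using f0 h0 by (simp add: conj_homeo_def conj_homeo_facts)
  then show "\<exists>h\<in>?c ` G. \<forall>x\<in>X. h (f x) = x" using h0 by blast
qed

lemma closed_invariant_conj_homeo_image:
  assumes "closed_invariant (conj_homeo \<phi> \<psi> X ` G) X Y"
  shows "closed_invariant G S (\<phi> ` Y)"
proof -
  have Y: "Y \<noteq> {}" "Y \<subseteq> X" "closedin (top_of_set X) Y"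
    and inv: "\<forall>f\<in>G. \<forall>y\<in>Y. conj_homeo \<phi> \<psi> X f y \<in> Y"
    using assms unfolding closed_invariant_def invariant_def by auto
  have "f (\<phi> y) \<in> \<phi> ` Y" if "f \<in> G" "y \<in> Y" for f y
  proof -
    have "\<psi> (f (\<phi> y)) \<in> Y" using inv that Y(2) by (force simp: conj_homeo_def)
    moreover have "\<phi> (\<psi> (f (\<phi> y))) = f (\<phi> y)" using that Y(2) by (blast intro: conj_homeo_facts)
    ultimately show ?thesis by (metis image_eqI)
  qed
  then show ?thesis unfolding closed_invariant_def invariant_def
    using Y homeomorphism_imp_closed_map[OF hom Y(3)] conj_homeo_facts(1) by blast
qed

lemma closed_invariant_conj_homeo_preimage:
  assumes "closed_invariant G S Z"
  shows "closed_invariant (conj_homeo \<phi> \<psi> X ` G) X (\<psi> ` Z)"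
proof -
  have Z: "Z \<noteq> {}" "Z \<subseteq> S" "closedin (top_of_set S) Z" and inv: "\<forall>f\<in>G. \<forall>z\<in>Z. f z \<in> Z"
    using assms unfolding closed_invariant_def invariant_def by auto
  have "conj_homeo \<phi> \<psi> X f (\<psi> z) = \<psi> (f z)" if "z \<in> Z" for f z
    using that Z(2) by (simp add: conj_homeo_def conj_homeo_facts subsetD)
  then have "\<forall>f\<in>conj_homeo \<phi> \<psi> X ` G. \<forall>x\<in>\<psi> ` Z. f x \<in> \<psi> ` Z" using inv by auto
  then show ?thesis unfolding closed_invariant_def invariant_def
    using Z homeomorphism_imp_closed_map[OF homeomorphism_symD[OF hom] Z(3)] conj_homeo_facts(2) by blast
qed

lemma height_conj_homeo: "height (conj_homeo \<phi> \<psi> X ` G) X = height G S"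
proof (rule antisym)
  have bij: "inj_on \<phi> X" "\<phi> ` X = S" "inj_on \<psi> S" "\<psi> ` S = X"
    using hom unfolding homeomorphism_def by (metis inj_on_inverseI)+
  show "height (conj_homeo \<phi> \<psi> X ` G) X \<le> height G S"
    by (rule height_le_by_map[OF bij(1,2) closed_invariant_conj_homeo_image])
  show "height G S \<le> height (conj_homeo \<phi> \<psi> X ` G) X"
    by (rule height_le_by_map[OF bij(3,4) closed_invariant_conj_homeo_preimage])
qed

end

lemma P_h_subset_homeomorphism:
  assumes "homeomorphism X S \<phi> \<psi>"
  shows "P_h S \<subseteq> P_h X"
proof
  fix h assume "h \<in> P_h S"
  then obtain G where G: "homeo_subgroup G S" "h = height G S" unfolding P_h_def by blast
  then show "h \<in> P_h X"
    using homeo_subgroup_conj_homeo[OF assms G(1)] height_conj_homeo[OF assms G(1)]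
    unfolding P_h_def G(2) by (intro CollectI exI[of _ "conj_homeo \<phi> \<psi> X ` G"]) simp
qed

section \<open>Every height is realised on the circle\<close>

abbreviation "S1 \<equiv> sphere (0::complex) 1"

definition circ :: "real \<Rightarrow> complex" where "circ t = exp (\<i> * of_real (2 * pi * t))"

lemma norm_circ [simp]: "norm (circ t) = 1"
  by (simp add: circ_def)

lemma circ_in_sphere: "circ t \<in> S1"
  by (simp add: circ_def)

lemma continuous_on_circ: "continuous_on A circ"
  unfolding circ_def by (intro continuous_intros)

lemma circ_eq_imp_int_diff: "circ s = circ t \<Longrightarrow> \<exists>n::int. s = t + n"
proof -
  assume "circ s = circ t"
  then obtain n :: int where "\<i> * of_real (2 * pi * s) = \<i> * of_real (2 * pi * t) + (of_int (2 * n) * pi) * \<i>"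
    unfolding circ_def exp_eq by blast
  then have "Im (\<i> * of_real (2 * pi * s)) = Im (\<i> * of_real (2 * pi * t) + (of_int (2 * n) * pi) * \<i>)"
    by simp
  then have "2 * pi * s = 2 * pi * t + 2 * n * pi" by simp
  then have "2 * pi * s = 2 * pi * (t + n)" by (simp add: algebra_simps)
  then have "s = t + n" using pi_gt_zero by simp
  then show ?thesis by blast
qed

lemma circ_eq_imp_eq: "circ s = circ t \<Longrightarrow> \<bar>s - t\<bar> < 1 \<Longrightarrow> s = t"
proof -
  assume "circ s = circ t" "\<bar>s - t\<bar> < 1"
  then obtain n :: int where n: "s = t + n" "\<bar>s - t\<bar> < 1" using circ_eq_imp_int_diff by blast
  then have "\<bar>real_of_int n\<bar> < 1" by simp
  then have "n = 0" by linarith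
  then show ?thesis using n by simp
qed

lemma circ_eq_imp_eq_interior: "circ s = circ t \<Longrightarrow> s \<in> {0..1} \<Longrightarrow> t \<in> {0<..<1} \<Longrightarrow> s = t"
  by (rule circ_eq_imp_eq) auto

lemma circ_add_1: "circ (t + 1) = circ t"
proof -
  have "\<i> * of_real (2 * pi * (t + 1)) = \<i> * of_real (2 * pi * t) + 2 * pi * \<i>"
    by (simp add: algebra_simps)
  then show ?thesis unfolding circ_def by (simp add: exp_add)
qed

lemma circ_0: "circ 0 = 1" by (simp add: circ_def)
lemma circ_1: "circ 1 = 1" using circ_add_1[of 0] circ_0 by simp

lemma cnj_circ: "cnj (circ t) = circ (1 - t)"
proof -
  have "cnj (circ t) = circ (- t)" unfolding circ_def by (simp add: exp_cnj)
  also have "\<dots> = circ (1 - t)" using circ_add_1[of "-t"] by simp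
  finally show ?thesis .
qed

lemma circ_surj: "z \<in> S1 \<Longrightarrow> \<exists>t\<in>{0..<1}. z = circ t"
proof -
  assume z: "z \<in> S1"
  have A: "0 \<le> Arg2pi z" "Arg2pi z < 2 * pi" "z = of_real (norm z) * exp (\<i> * of_real (Arg2pi z))"
    using Arg2pi[of z] unfolding is_Arg_def by auto
  define t where "t = Arg2pi z / (2 * pi)"
  have "t \<in> {0..<1}" using A by (simp add: t_def field_simps)
  moreover have "z = circ t" using A z by (simp add: circ_def t_def)
  ultimately show ?thesis by blast
qed

lemma circ_image_unit_interval: "circ ` {0..1} = S1"
  using circ_surj circ_in_sphere by fastforce

lemma compact_circ_image: "compact A \<Longrightarrow> compact (circ ` A)"
  by (rule compact_continuous_image[OF continuous_on_circ])

definition pwlin :: "real \<Rightarrow> real \<Rightarrow> real \<Rightarrow> real" where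
  "pwlin x y s = (if s \<le> x then s * (y / x) else y + (s - x) * ((1 - y) / (1 - x)))"

lemma continuous_on_pwlin: "0 < x \<Longrightarrow> x < 1 \<Longrightarrow> continuous_on A (pwlin x y)"
  unfolding pwlin_def
  by (rule continuous_on_cases_le[where h = "\<lambda>s. s", OF _ _ continuous_on_id])
     (auto intro!: continuous_intros)

lemma pwlin_simps: "0 < x \<Longrightarrow> x < 1 \<Longrightarrow> pwlin x y 0 = 0 \<and> pwlin x y 1 = 1 \<and> pwlin x y x = y"
  by (simp add: pwlin_def)

lemma pwlin_in_unit_interval: "0 < x \<Longrightarrow> x < 1 \<Longrightarrow> 0 < y \<Longrightarrow> y < 1 \<Longrightarrow> s \<in> {0..1} \<Longrightarrow> pwlin x y s \<in> {0..1}"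
proof -
  assume a: "0 < x" "x < 1" "0 < y" "y < 1" "s \<in> {0..1}"
  show ?thesis
  proof (cases "s \<le> x")
    case True
    have "s / x \<le> 1" "0 \<le> s / x" using True a by auto
    then have "(s / x) * y \<le> y" "0 \<le> (s / x) * y" using a by (intro mult_left_le_one_le mult_nonneg_nonneg; simp)+
    moreover have v: "pwlin x y s = (s / x) * y" using True by (simp add: pwlin_def)
    ultimately show ?thesis unfolding v atLeastAtMost_iff using a by linarith
  next
    case False
    have "(s - x) / (1 - x) \<le> 1" "0 \<le> (s - x) / (1 - x)" using False a by auto
    then have "((s - x) / (1 - x)) * (1 - y) \<le> 1 - y" "0 \<le> ((s - x) / (1 - x)) * (1 - y)"
      using a by (intro mult_left_le_one_le mult_nonneg_nonneg; simp)+
    moreover have "(s - x) * ((1 - y) / (1 - x)) = ((s - x) / (1 - x)) * (1 - y)" by simp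
    ultimately show ?thesis using False a by (simp add: pwlin_def)
  qed
qed

lemma pwlin_inverse: "0 < x \<Longrightarrow> x < 1 \<Longrightarrow> 0 < y \<Longrightarrow> y < 1 \<Longrightarrow> pwlin y x (pwlin x y s) = s"
proof (cases "s \<le> x")
  case True
  assume a: "0 < x" "x < 1" "0 < y" "y < 1"
  have "s * (y / x) \<le> y" using True a by (simp add: field_simps mult_right_mono)
  then show ?thesis using True a by (simp add: pwlin_def)
next
  case False
  assume a: "0 < x" "x < 1" "0 < y" "y < 1"
  define v where "v = y + (s - x) * ((1 - y) / (1 - x))"
  have "(s - x) * ((1 - y) / (1 - x)) > 0" using False a by simp
  then have gt: "\<not> v \<le> y" by (simp add: v_def)
  have c: "((1 - y) / (1 - x)) * ((1 - x) / (1 - y)) = 1" using a by simp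
  have eq: "(s - x) * ((1 - y) / (1 - x)) * ((1 - x) / (1 - y)) = s - x" by (metis c mult.assoc mult.right_neutral)
  have "pwlin x y s = v" using False by (simp add: pwlin_def v_def)
  moreover have "pwlin y x v = x + (v - y) * ((1 - x) / (1 - y))" using gt by (simp add: pwlin_def)
  moreover have "v - y = (s - x) * ((1 - y) / (1 - x))" by (simp add: v_def)
  moreover have "x + (s - x) * ((1 - y) / (1 - x)) * ((1 - x) / (1 - y)) = s" unfolding eq by simp
  ultimately show ?thesis by simp
qed

definition arc_slide :: "(real \<Rightarrow> 'a::topological_space) \<Rightarrow> real \<Rightarrow> real \<Rightarrow> 'a \<Rightarrow> 'a" where
  "arc_slide \<gamma> x y z = (if z \<in> path_image \<gamma> then \<gamma> (pwlin x y (inv_into {0..1} \<gamma> z)) else z)"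

lemma arc_slide:
  fixes \<gamma> :: "real \<Rightarrow> 'a::metric_space"
  assumes arc: "arc \<gamma>" and x: "0 < x" "x < 1" and y: "0 < y" "y < 1"
  shows arc_slide_in_path_image: "z \<in> path_image \<gamma> \<Longrightarrow> arc_slide \<gamma> x y z \<in> path_image \<gamma>"
    and arc_slide_inverse: "arc_slide \<gamma> y x (arc_slide \<gamma> x y z) = z"
    and arc_slide_moves: "arc_slide \<gamma> x y (\<gamma> x) = \<gamma> y"
    and arc_slide_fixes: "z \<notin> \<gamma> ` {0<..<1} \<Longrightarrow> arc_slide \<gamma> x y z = z"
    and continuous_on_arc_slide: "continuous_on (path_image \<gamma>) (arc_slide \<gamma> x y)"
proof -
  let ?A = "path_image \<gamma>" and ?i = "inv_into {0..1} \<gamma>"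
  have inj: "inj_on \<gamma> {0..1}" using arc_imp_inj_on[OF arc] .
  have i\<gamma>: "\<And>s. s \<in> {0..1} \<Longrightarrow> ?i (\<gamma> s) = s" using inj by (simp add: inv_into_f_f)
  have \<gamma>i: "\<And>z. z \<in> ?A \<Longrightarrow> \<gamma> (?i z) = z" and iA: "\<And>z. z \<in> ?A \<Longrightarrow> ?i z \<in> {0..1}"
    unfolding path_image_def by (auto intro: f_inv_into_f simp: i\<gamma>)
  have \<gamma>A: "\<And>s. s \<in> {0..1} \<Longrightarrow> \<gamma> s \<in> ?A" unfolding path_image_def by blast
  show in_A: "arc_slide \<gamma> x y z \<in> ?A" if "z \<in> ?A" for z
    using that iA \<gamma>A pwlin_in_unit_interval x y by (simp add: arc_slide_def)
  show "arc_slide \<gamma> y x (arc_slide \<gamma> x y z) = z"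
    using in_A[of z] i\<gamma> iA pwlin_in_unit_interval pwlin_inverse \<gamma>i x y by (simp add: arc_slide_def)
  show "arc_slide \<gamma> x y (\<gamma> x) = \<gamma> y" using x y i\<gamma> \<gamma>A pwlin_simps by (simp add: arc_slide_def)
  show "arc_slide \<gamma> x y z = z" if z: "z \<notin> \<gamma> ` {0<..<1}"
  proof (cases "z \<in> ?A")
    case True
    then have "?i z \<notin> {0<..<1}" using z \<gamma>i by (metis image_eqI)
    then have "?i z = 0 \<or> ?i z = 1" using iA[OF True] by auto
    then have "arc_slide \<gamma> x y z = \<gamma> (?i z)" using True pwlin_simps x by (auto simp: arc_slide_def)
    then show ?thesis using True \<gamma>i by simp
  qed (simp add: arc_slide_def)
  obtain g where "homeomorphism {0..1} ?A \<gamma> g" using homeomorphism_arc[OF arc] by blast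
  then have g: "continuous_on ?A g" "\<And>z. z \<in> ?A \<Longrightarrow> g z \<in> {0..1}" "\<And>z. z \<in> ?A \<Longrightarrow> \<gamma> (g z) = z"
    unfolding homeomorphism_def by auto
  have "g z = ?i z" if "z \<in> ?A" for z by (metis g(2,3) i\<gamma> that)
  then have "continuous_on ?A ?i" using continuous_on_eq[OF g(1)] by blast
  then have "continuous_on ?A (\<lambda>z. \<gamma> (pwlin x y (?i z)))"
    by (intro continuous_on_compose2[OF arc_imp_path[OF arc, unfolded path_def]]
        continuous_on_compose2[OF continuous_on_pwlin[where A=UNIV]])
      (use x y iA pwlin_in_unit_interval in \<open>auto simp: i\<gamma>\<close>)
  then show "continuous_on ?A (arc_slide \<gamma> x y)"
    by (rule continuous_on_eq) (simp add: arc_slide_def)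
qed

lemma arc_slide_Homeo:
  fixes \<gamma> :: "real \<Rightarrow> 'a::metric_space"
  assumes arc: "arc \<gamma>" and C: "closed C" and Y: "Y = path_image \<gamma> \<union> C"
    and int: "path_image \<gamma> \<inter> C \<subseteq> {pathstart \<gamma>, pathfinish \<gamma>}"
    and x: "0 < x" "x < 1" and y: "0 < y" "y < 1"
  shows "\<exists>f\<in>Homeo Y. f (\<gamma> x) = \<gamma> y \<and> (\<forall>z\<in>Y. z \<notin> \<gamma> ` {0<..<1} \<longrightarrow> f z = z)
           \<and> f ` path_image \<gamma> = path_image \<gamma>"
proof -
  let ?A = "path_image \<gamma>" and ?f = "arc_slide \<gamma> x y" and ?g = "arc_slide \<gamma> y x"
  have "z \<notin> \<gamma> ` {0<..<1}" if "z \<in> C" for z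
  proof
    assume "z \<in> \<gamma> ` {0<..<1}"
    then obtain s where s: "s \<in> {0<..<1}" "z = \<gamma> s" by blast
    then have "\<gamma> s \<in> {\<gamma> 0, \<gamma> 1}"
      using int that unfolding path_image_def pathstart_def pathfinish_def by force
    then show False using arc_imp_inj_on[OF arc] s(1) unfolding inj_on_def by force
  qed
  then have fixC: "?f z = z" "?g z = z" if "z \<in> C" for z
    using that arc_slide_fixes[OF arc x y] arc_slide_fixes[OF arc y x] by auto
  have closedA: "closed ?A" using arc by (simp add: arc_imp_path closed_path_image)
  have cont: "continuous_on Y h" if "h = ?f \<or> h = ?g" for h
  proof -
    have "continuous_on ?A h" using that continuous_on_arc_slide[OF arc x y] continuous_on_arc_slide[OF arc y x] by auto
    moreover have "continuous_on C h" using that fixC by (auto intro: continuous_on_eq[OF continuous_on_id])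
    ultimately show ?thesis unfolding Y by (intro continuous_on_closed_Un closedA C)
  qed
  have map: "h z \<in> Y" if "z \<in> Y" "h = ?f \<or> h = ?g" for h z
    using that arc_slide_in_path_image[OF arc x y] arc_slide_in_path_image[OF arc y x] fixC unfolding Y by auto
  have "homeomorphism Y Y ?f ?g"
    by (rule homeomorphismI) (use cont map arc_slide_inverse[OF arc x y] arc_slide_inverse[OF arc y x] in auto)
  then have "?f \<in> Homeo Y" unfolding Homeo_def Y by (auto simp: arc_slide_def)
  moreover have "?f ` ?A = ?A"
    using arc_slide_in_path_image[OF arc x y] arc_slide_in_path_image[OF arc y x] arc_slide_inverse[OF arc y x]
    by (metis image_subset_iff subsetI subset_antisym imageI)
  ultimately show ?thesis using arc_slide_moves[OF arc x y] arc_slide_fixes[OF arc x y] by blast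
qed

lemma affine_image_unit_interval:
  fixes a b :: real assumes "a < b"
  shows "(\<lambda>s. a + s * (b - a)) ` {0..1} = {a..b}" "(\<lambda>s. a + s * (b - a)) ` {0<..<1} = {a<..<b}"
proof -
  have e: "t = a + ((t - a) / (b - a)) * (b - a)" for t using assms by (simp add: field_simps)
  show "(\<lambda>s. a + s * (b - a)) ` {0..1} = {a..b}"
  proof (intro antisym subsetI)
    fix t assume "t \<in> {a..b}"
    then show "t \<in> (\<lambda>s. a + s * (b - a)) ` {0..1}"
      using assms by (intro image_eqI[where x="(t - a) / (b - a)"]) (auto simp: field_simps)
  next
    fix t assume "t \<in> (\<lambda>s. a + s * (b - a)) ` {0..1}"
    then obtain s where s: "s \<in> {0..1}" "t = a + s * (b - a)" by blast
    have h1: "s * (b - a) \<le> 1 * (b - a)" using s assms by (intro mult_right_mono) auto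
    have h2: "0 \<le> s * (b - a)" using s assms by simp
    show "t \<in> {a..b}" unfolding atLeastAtMost_iff using h1 h2 s(2) by simp
  qed
  show "(\<lambda>s. a + s * (b - a)) ` {0<..<1} = {a<..<b}"
  proof (intro antisym subsetI)
    fix t assume "t \<in> {a<..<b}"
    then show "t \<in> (\<lambda>s. a + s * (b - a)) ` {0<..<1}"
      using assms by (intro image_eqI[where x="(t - a) / (b - a)"]) (auto simp: field_simps)
  next
    fix t assume "t \<in> (\<lambda>s. a + s * (b - a)) ` {0<..<1}"
    then obtain s where s: "s \<in> {0<..<1}" "t = a + s * (b - a)" by blast
    have h1: "s * (b - a) < 1 * (b - a)" using s assms by (intro mult_strict_right_mono) auto
    have h2: "0 < s * (b - a)" using s assms by simp
    show "t \<in> {a<..<b}" using h1 h2 s(2) by simp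
  qed
qed

lemma circle_slide_Homeo:
  assumes ab: "0 \<le> a" "a < x" "x < b" "a < y" "y < b" "b \<le> 1" "b - a < 1"
  shows "\<exists>f\<in>Homeo (S1). f (circ x) = circ y \<and> (\<forall>z\<in>S1. z \<notin> circ ` {a<..<b} \<longrightarrow> f z = z)
           \<and> f ` (circ ` {a..b}) = circ ` {a..b}"
proof -
  have ab': "a < b" using ab by simp
  define \<gamma> where "\<gamma> = (\<lambda>s. circ (a + s * (b - a)))"
  have pim: "path_image \<gamma> = circ ` {a..b}"
    unfolding path_image_def \<gamma>_def using affine_image_unit_interval[OF ab'] by (metis image_image)
  have oim: "\<gamma> ` {0<..<1} = circ ` {a<..<b}"
    unfolding \<gamma>_def using affine_image_unit_interval[OF ab'] by (metis image_image)
  have "path \<gamma>" unfolding path_def \<gamma>_def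
    by (intro continuous_on_compose2[OF continuous_on_circ[of UNIV]] continuous_intros) auto
  moreover have "inj_on \<gamma> {0..1}"
  proof (rule inj_onI)
    fix s s' assume s: "s \<in> {0..1}" "s' \<in> {0..1}" "\<gamma> s = \<gamma> s'"
    have "\<bar>(a + s * (b - a)) - (a + s' * (b - a))\<bar> = \<bar>s - s'\<bar> * (b - a)"
      using ab' by (simp add: abs_mult left_diff_distrib[symmetric])
    also have "\<dots> \<le> 1 * (b - a)" using s ab' by (intro mult_right_mono) auto
    finally have "\<bar>(a + s * (b - a)) - (a + s' * (b - a))\<bar> < 1" using ab by simp
    then have "a + s * (b - a) = a + s' * (b - a)" using circ_eq_imp_eq s(3) unfolding \<gamma>_def by blast
    then show "s = s'" using ab' by simp
  qed
  ultimately have arc: "arc \<gamma>" unfolding arc_def by blast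
  define C where "C = circ ` ({0..a} \<union> {b..1})"
  have C: "closed C" unfolding C_def by (intro compact_imp_closed compact_circ_image) auto
  have Y: "S1 = path_image \<gamma> \<union> C"
  proof -
    have "{0..1} = {0..a} \<union> {a..b} \<union> {b..(1::real)}" using ab by auto
    then show ?thesis unfolding pim C_def circ_image_unit_interval[symmetric] by auto
  qed
  have int: "path_image \<gamma> \<inter> C \<subseteq> {pathstart \<gamma>, pathfinish \<gamma>}"
  proof
    fix z assume "z \<in> path_image \<gamma> \<inter> C"
    then have z: "z \<in> circ ` {a..b}" "z \<in> circ ` ({0..a} \<union> {b..1})" unfolding pim C_def by auto
    obtain s where s: "s \<in> {a..b}" "z = circ s" using z(1) by blast
    obtain t where t: "t \<in> {0..a} \<union> {b..1}" "z = circ t" using z(2) by blast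
    have st: "s \<in> {a..b}" "t \<in> {0..a} \<union> {b..1}" "z = circ s" "circ t = circ s" using s t by auto
    have "s = a \<or> s = b"
    proof (rule ccontr)
      assume "\<not> (s = a \<or> s = b)"
      then have "s \<in> {0<..<1}" "a < s" "s < b" using st ab by auto
      then have "t = s" using circ_eq_imp_eq_interior[OF st(4)] st ab by auto
      then show False using st \<open>a < s\<close> \<open>s < b\<close> by auto
    qed
    then show "z \<in> {pathstart \<gamma>, pathfinish \<gamma>}" using st by (auto simp: pathstart_def pathfinish_def \<gamma>_def)
  qed
  define x' where "x' = (x - a) / (b - a)"
  define y' where "y' = (y - a) / (b - a)"
  have xy: "0 < x'" "x' < 1" "0 < y'" "y' < 1" using ab by (auto simp: x'_def y'_def field_simps)
  have gx: "\<gamma> x' = circ x" "\<gamma> y' = circ y" using ab' by (simp_all add: \<gamma>_def x'_def y'_def)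
  from arc_slide_Homeo[OF arc C Y int xy] show ?thesis unfolding gx oim pim by blast
qed

lemma closedin_S1: "closed Y \<Longrightarrow> Y \<subseteq> S1 \<Longrightarrow> closedin (top_of_set S1) Y"
  by (simp add: closed_subset)

lemma infinite_S1: "infinite S1"
proof
  have "inj_on circ {0..1/2}" by (rule inj_onI) (rule circ_eq_imp_eq; auto)
  moreover assume "finite S1"
  then have "finite (circ ` {0..1/2})" using circ_in_sphere by (blast intro: finite_subset)
  ultimately have "finite {0..1/2 :: real}" using finite_imageD by blast
  then show False using infinite_Icc[of 0 "1/2 :: real"] by simp
qed

definition rotation :: "complex \<Rightarrow> complex \<Rightarrow> complex" where
  "rotation a = (\<lambda>w. if w \<in> S1 then a * w else w)"

lemma Homeo_rotation:
  assumes a: "a \<in> S1" shows "rotation a \<in> Homeo S1"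
proof -
  have aa: "cnj a * a = 1" "a * cnj a = 1"
    using a complex_norm_square[of a] by (simp_all add: mult.commute)
  have mult_S1: "b * w \<in> S1" if "w \<in> S1" "b = a \<or> b = cnj a" for b w
    using a that by (auto simp: norm_mult)
  have cont: "continuous_on S1 (rotation b)" for b
    by (rule continuous_on_eq[of _ "\<lambda>w. b * w"]) (auto intro: continuous_intros simp: rotation_def)
  have "homeomorphism S1 S1 (rotation a) (rotation (cnj a))"
  proof (rule homeomorphismI[OF cont cont])
    show "rotation a ` S1 \<subseteq> S1" "rotation (cnj a) ` S1 \<subseteq> S1"
      using mult_S1 by (auto simp: rotation_def)
    fix z assume z: "z \<in> S1"
    have "cnj a * (a * z) = z" "a * (cnj a * z) = z" using aa by (simp_all add: mult.assoc[symmetric])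
    then show "rotation (cnj a) (rotation a z) = z" "rotation a (rotation (cnj a) z) = z"
      using mult_S1 z by (simp_all add: rotation_def)
  qed
  then show ?thesis unfolding Homeo_def by (auto simp: rotation_def)
qed

lemma height_Homeo_S1: "height (Homeo S1) S1 = 0"
proof (rule height_transitive[OF homeo_subgroup_Homeo])
  show "1 \<in> S1" by simp
  show "\<exists>g\<in>Homeo S1. g 1 = a" if "a \<in> S1" for a
    using Homeo_rotation[OF that] by (intro bexI[of _ "rotation a"]) (simp_all add: rotation_def)
qed

definition grid_cell :: "nat \<Rightarrow> nat \<Rightarrow> real set" where
  "grid_cell N j = {real j / real N..(real j + 1) / real N}"

lemma grid_cell_bounds:
  assumes "j < N" shows "0 \<le> real j / real N" "(real j + 1) / real N \<le> 1"
proof -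
  have "real j + 1 \<le> real N" using assms by linarith
  then show "0 \<le> real j / real N" "(real j + 1) / real N \<le> 1" by (simp_all add: divide_le_eq_1)
qed

lemma grid_cell_subset_unit_interval: "j < N \<Longrightarrow> grid_cell N j \<subseteq> {0..1}"
  using grid_cell_bounds[of j N] by (auto simp: grid_cell_def)

lemma reflect_grid_cell:
  assumes "j < N" shows "(\<lambda>s. 1 - s) ` grid_cell N j = grid_cell N (N - j - 1)"
  unfolding grid_cell_def image_diff_atLeastAtMost using assms
  by (simp add: field_simps of_nat_diff)

lemma no_grid_point_strictly_inside:
  fixes c :: int
  assumes "real j / real N < real_of_int c / real N" "real_of_int c / real N < (real j + 1) / real N"
  shows False
proof -
  have "N > 0" using assms by (cases N) auto
  then have "real j < real_of_int c" "real_of_int c < real j + 1"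
    using assms by (simp_all add: divide_less_cancel)
  then have "int j < c" "c < int j + 1" by linarith+
  then show False by linarith
qed

lemma grid_cell_unique:
  assumes "s \<in> grid_cell N k" "real j / real N < s" "s < (real j + 1) / real N"
  shows "k = j"
proof -
  have "N > 0" using assms by (cases N) auto
  moreover have "real k / real N < (real j + 1) / real N" "real j / real N < (real k + 1) / real N"
    using assms by (auto simp: grid_cell_def)
  ultimately have "real k < real j + 1" "real j < real k + 1" by (simp_all add: divide_less_cancel)
  then show ?thesis by linarith
qed

lemma grid_cell_exists:
  assumes "N > 0" "l \<ge> 1" "0 \<le> u" "u \<le> real l / real N"
  shows "\<exists>k<l. u \<in> grid_cell N k"
proof (cases "u * real N \<ge> real l")
  case True
  then have "u = (real (l - 1) + 1) / real N" using assms by (simp add: field_simps of_nat_diff)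
  moreover have "real (l - 1) / real N \<le> (real (l - 1) + 1) / real N" by (simp add: divide_right_mono)
  ultimately show ?thesis using assms(2) by (intro exI[of _ "l - 1"]) (auto simp: grid_cell_def)
next
  case False
  define k where "k = nat \<lfloor>u * real N\<rfloor>"
  have "real k = of_int \<lfloor>u * real N\<rfloor>" using assms by (simp add: k_def)
  then have "real k \<le> u * real N" "u * real N < real k + 1"
    using of_int_floor_le[of "u * real N"] real_of_int_floor_add_one_gt[of "u * real N"] by linarith+
  then have "k < l" "u \<in> grid_cell N k"
    using False assms by (auto simp: grid_cell_def field_simps)
  then show ?thesis by blast
qed

lemma circ_eq_in_grid_cell:
  assumes "j < N" "c \<in> {0..1}" "circ c = circ s"
    "real j / real N < s" "s < (real j + 1) / real N"
  shows "c = s"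
  using circ_eq_imp_eq_interior[OF assms(3) assms(2)] grid_cell_bounds[OF assms(1)] assms(4,5)
  by auto

text \<open>The family stabilised by \<open>grid_group N\<close>: for each j < N, the two points
  at angles \<open>\<plusminus>j/N\<close> and the two mirror-image arcs at angles \<open>\<plusminus>[j/N, (j+1)/N]\<close>
  (angles in turns). Complex conjugation and slides inside a cell preserve it, leaving the
  orbit representatives at angles \<open>i/(2N)\<close>, \<open>i \<le> N\<close>.\<close>

definition grid_pair :: "nat \<Rightarrow> nat \<Rightarrow> complex set" where
  "grid_pair N j = {circ (real j / real N), circ (1 - real j / real N)}"
definition grid_arcs :: "nat \<Rightarrow> nat \<Rightarrow> complex set" where
  "grid_arcs N j = circ ` (grid_cell N j \<union> (\<lambda>s. 1 - s) ` grid_cell N j)"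
definition cap :: "real \<Rightarrow> complex set" where
  "cap r = circ ` ({0..r} \<union> {1 - r..1})"
definition grid_family :: "nat \<Rightarrow> complex set set" where
  "grid_family N = {grid_pair N j | j. j < N} \<union> {grid_arcs N j | j. j < N}"
definition grid_group :: "nat \<Rightarrow> (complex \<Rightarrow> complex) set" where
  "grid_group N = stabilizer S1 (grid_family N)"

lemma grid_family_subset: "T \<in> grid_family N \<Longrightarrow> T \<subseteq> S1"
  by (auto simp: grid_family_def grid_pair_def grid_arcs_def circ_in_sphere)

lemma homeo_subgroup_grid_group: "homeo_subgroup (grid_group N) S1"
  unfolding grid_group_def by (rule homeo_subgroup_stabilizer) (rule grid_family_subset)

definition reflection :: "complex \<Rightarrow> complex" where
  "reflection = (\<lambda>z. if z \<in> S1 then cnj z else z)"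

lemma reflection_in_grid_group: "reflection \<in> grid_group N"
proof -
  have c: "continuous_on S1 reflection"
    by (rule continuous_on_eq[OF continuous_on_cnj[OF continuous_on_id]]) (simp add: reflection_def)
  have "homeomorphism S1 S1 reflection reflection"
    by (rule homeomorphismI[OF c c]) (auto simp: reflection_def)
  then have H: "reflection \<in> Homeo S1" unfolding Homeo_def by (auto simp: reflection_def)
  have cnj_image: "cnj ` circ ` M = circ ` ((\<lambda>s. 1 - s) ` M)" for M
    by (auto simp: image_image cnj_circ)
  have "reflection ` T = T" if T: "T \<in> grid_family N" for T
  proof -
    have "reflection ` T = cnj ` T" using grid_family_subset[OF T] by (auto simp: reflection_def)
    also have "\<dots> = T"
    proof -
      obtain j where "T = grid_pair N j \<or> T = grid_arcs N j" using T unfolding grid_family_def by blast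
      then show ?thesis
      proof
        assume "T = grid_pair N j"
        then show ?thesis by (auto simp: grid_pair_def cnj_circ)
      next
        assume T: "T = grid_arcs N j"
        have "cnj ` T = circ ` ((\<lambda>s. 1 - s) ` grid_cell N j \<union> (\<lambda>s. 1 - s) ` (\<lambda>s. 1 - s) ` grid_cell N j)"
          unfolding T grid_arcs_def cnj_image image_Un ..
        also have "\<dots> = T" unfolding T grid_arcs_def image_image by (simp add: Un_commute)
        finally show ?thesis .
      qed
    qed
    finally show ?thesis .
  qed
  then show ?thesis unfolding grid_group_def stabilizer_def using H by blast
qed

lemma image_eq_if_fixed_outside:
  assumes "T \<subseteq> A" "\<forall>z\<in>A. z \<notin> U \<longrightarrow> f z = z" "f ` V = V" "U \<subseteq> V" "T \<inter> U = {} \<or> V \<subseteq> T"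
  shows "f ` T = T"
  using assms(5)
proof
  assume "T \<inter> U = {}"
  then show ?thesis using assms(1,2) by (force intro: image_eqI)
next
  assume VT: "V \<subseteq> T"
  have "f ` T = f ` (T - V) \<union> f ` V" using VT by blast
  also have "f ` (T - V) = T - V" using assms(1,2,4) by (force intro: image_eqI)
  finally show ?thesis using assms(3) VT by blast
qed

lemma grid_pair_Int_cell:
  assumes j: "j < N" and k: "k \<le> N" and ab: "real j / real N \<le> a" "b \<le> (real j + 1) / real N"
  shows "grid_pair N k \<inter> circ ` {a<..<b} = {}"
proof -
  have "circ s \<notin> grid_pair N k" if s: "a < s" "s < b" for s
  proof
    have "1 - real k / real N = real (N - k) / real N" using j k by (simp add: of_nat_diff field_simps)
    moreover assume "circ s \<in> grid_pair N k"
    ultimately obtain n where n: "n \<le> N" "circ (real n / real N) = circ s"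
      using k unfolding grid_pair_def by (metis diff_le_self insertE empty_iff)
    have "real n / real N \<in> {0..1}" using n(1) by (auto simp: divide_le_eq_1)
    then have "real n / real N = s" using circ_eq_in_grid_cell[OF j _ n(2)] s ab by auto
    then show False using no_grid_point_strictly_inside[of j N "int n"] s ab by auto
  qed
  then show ?thesis by auto
qed

lemma grid_arcs_Int_cell:
  assumes j: "j < N" and k: "k < N" and ab: "real j / real N \<le> a" "b \<le> (real j + 1) / real N"
    and meet: "grid_arcs N k \<inter> circ ` {a<..<b} \<noteq> {}"
  shows "circ ` grid_cell N j \<subseteq> grid_arcs N k"
proof -
  have arcs: "grid_arcs N k = circ ` (grid_cell N k \<union> grid_cell N (N - k - 1))"
    unfolding grid_arcs_def reflect_grid_cell[OF k] ..
  obtain z where "z \<in> grid_arcs N k" "z \<in> circ ` {a<..<b}" using meet by blast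
  then obtain s c where s: "s \<in> {a<..<b}" "circ c = circ s"
    and c: "c \<in> grid_cell N k \<union> grid_cell N (N - k - 1)"
    unfolding arcs by (metis imageE)
  have "c \<in> {0..1}" using c grid_cell_subset_unit_interval[of k N] grid_cell_subset_unit_interval[of "N - k - 1" N] k
    by auto
  then have "c = s" using circ_eq_in_grid_cell[OF j _ s(2)] s ab by auto
  then have "real j / real N < c" "c < (real j + 1) / real N" using s ab by auto
  then have "k = j \<or> N - k - 1 = j" using c grid_cell_unique by blast
  then show ?thesis unfolding arcs by auto
qed

lemma midpoint_bounds:
  fixes p q t m :: real assumes "p < min t m" "max t m < q"
  shows "p < (p + min t m) / 2" "(p + min t m) / 2 < m" "(p + min t m) / 2 < t"
    "m < (q + max t m) / 2" "t < (q + max t m) / 2" "(q + max t m) / 2 < q"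
  using assms by auto

lemma grid_group_slide:
  assumes j: "j < N" and t: "real j / real N < t" "t < (real j + 1) / real N"
    and m: "real j / real N < m" "m < (real j + 1) / real N"
  shows "\<exists>f\<in>grid_group N. f (circ m) = circ t"
proof -
  define a where "a = (real j / real N + min t m) / 2"
  define b where "b = ((real j + 1) / real N + max t m) / 2"
  have "real j / real N < min t m" "max t m < (real j + 1) / real N" using t m by auto
  from midpoint_bounds[OF this]
  have ab: "real j / real N < a" "a < m" "a < t" "m < b" "t < b" "b < (real j + 1) / real N"
    unfolding a_def b_def by auto
  then have "0 \<le> a" "b \<le> 1" "b - a < 1"
    using grid_cell_bounds[OF j] by linarith+
  then obtain f where f: "f \<in> Homeo S1" "f (circ m) = circ t"
    "\<forall>z\<in>S1. z \<notin> circ ` {a<..<b} \<longrightarrow> f z = z" "f ` (circ ` {a..b}) = circ ` {a..b}"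
    using circle_slide_Homeo[of a m b t] ab by fastforce
  have ab_cell: "circ ` {a..b} \<subseteq> circ ` grid_cell N j"
    using ab by (intro image_mono) (auto simp: grid_cell_def)
  have "f ` T = T" if T: "T \<in> grid_family N" for T
  proof (rule image_eq_if_fixed_outside[OF grid_family_subset[OF T] f(3) f(4)])
    have a_b: "real j / real N \<le> a" "b \<le> (real j + 1) / real N" using ab by auto
    obtain k where k: "k < N" "T = grid_pair N k \<or> T = grid_arcs N k"
      using T unfolding grid_family_def by blast
    from k(2) show "T \<inter> circ ` {a<..<b} = {} \<or> circ ` {a..b} \<subseteq> T"
    proof
      assume "T = grid_pair N k"
      then show ?thesis using grid_pair_Int_cell[OF j _ a_b] k(1) by simp
    next
      assume "T = grid_arcs N k"
      then show ?thesis using grid_arcs_Int_cell[OF j k(1) a_b] ab_cell by blast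
    qed
  qed auto
  then have "f \<in> grid_group N" using f(1) unfolding grid_group_def stabilizer_def by blast
  then show ?thesis using f(2) by blast
qed

definition grid_reps :: "nat \<Rightarrow> complex set" where
  "grid_reps N = (\<lambda>i. circ (real i / (2 * real N))) ` {..N}"

lemma card_grid_reps: "N > 0 \<Longrightarrow> card (grid_reps N) = N + 1"
proof -
  assume N: "N > 0"
  have "inj_on (\<lambda>i. circ (real i / (2 * real N))) {..N}"
  proof (rule inj_onI)
    fix i i' assume ii: "i \<in> {..N}" "i' \<in> {..N}" "circ (real i / (2 * real N)) = circ (real i' / (2 * real N))"
    have "0 \<le> real i / (2 * real N)" "real i / (2 * real N) \<le> 1/2"
      "0 \<le> real i' / (2 * real N)" "real i' / (2 * real N) \<le> 1/2"
      using ii N by (auto simp: field_simps)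
    then have "\<bar>real i / (2 * real N) - real i' / (2 * real N)\<bar> < 1" by linarith
    then have "real i / (2 * real N) = real i' / (2 * real N)" using circ_eq_imp_eq ii(3) by blast
    then show "i = i'" using N by (simp add: field_simps)
  qed
  then show ?thesis unfolding grid_reps_def by (simp add: card_image)
qed

lemma grid_reps_subset: "grid_reps N \<subseteq> S1" by (auto simp: grid_reps_def circ_in_sphere)

lemma grid_group_orbit_reps_upper_half:
  assumes N: "N > 0" and u: "0 \<le> u" "u \<le> 1/2"
  shows "\<exists>r\<in>grid_reps N. \<exists>g\<in>grid_group N. g r = circ u"
proof -
  define j where "j = nat \<lfloor>u * real N\<rfloor>"
  have "real j = of_int \<lfloor>u * real N\<rfloor>" using u by (simp add: j_def)
  then have fl: "real j \<le> u * real N" "u * real N < real j + 1"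
    using of_int_floor_le[of "u * real N"] real_of_int_floor_add_one_gt[of "u * real N"] by linarith+
  have uN: "u * real N \<le> real N / 2" using u N by (simp add: field_simps)
  show ?thesis
  proof (cases "u * real N = real j")
    case True
    have "u = real j / real N" using True N by (simp add: field_simps)
    then have eq: "circ (real (2 * j) / (2 * real N)) = circ u" using N by simp
    have "real (2 * j) \<le> real N" using True uN by simp
    then have "2 * j \<le> N" by linarith
    then have "circ (real (2 * j) / (2 * real N)) \<in> grid_reps N" unfolding grid_reps_def by blast
    moreover have "id \<in> grid_group N" using homeo_subgroup_grid_group unfolding homeo_subgroup_def by blast
    ultimately show ?thesis using eq by (metis id_apply)
  next
    case False
    then have lt: "real j < u * real N" using fl by simp
    then have "real (2 * j) < real N" using uN by simp
    then have jN: "2 * j + 1 \<le> N" by linarith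
    have "real j / real N < u" "u < (real j + 1) / real N" using lt fl N by (auto simp: field_simps)
    moreover have "real j / real N < real (2 * j + 1) / (2 * real N)"
      "real (2 * j + 1) / (2 * real N) < (real j + 1) / real N"
      using N by (auto simp: field_simps)
    ultimately obtain g where "g \<in> grid_group N" "g (circ (real (2 * j + 1) / (2 * real N))) = circ u"
      using grid_group_slide[of j N u] jN by auto
    moreover have "circ (real (2 * j + 1) / (2 * real N)) \<in> grid_reps N" using jN unfolding grid_reps_def by blast
    ultimately show ?thesis by blast
  qed
qed

lemma grid_group_orbit_reps:
  assumes N: "N > 0" and z: "z \<in> S1"
  shows "\<exists>r\<in>grid_reps N. \<exists>g\<in>grid_group N. g r = z"
proof -
  obtain t where t: "t \<in> {0..<1}" "z = circ t" using circ_surj[OF z] by blast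
  show ?thesis
  proof (cases "t \<le> 1/2")
    case True
    then show ?thesis using grid_group_orbit_reps_upper_half[OF N, of t] t by auto
  next
    case False
    obtain r g where rg: "r \<in> grid_reps N" "g \<in> grid_group N" "g r = circ (1 - t)"
      using grid_group_orbit_reps_upper_half[OF N, of "1 - t"] False t by auto
    have "reflection \<circ> g \<in> grid_group N"
      using homeo_subgroup_grid_group reflection_in_grid_group rg(2) unfolding homeo_subgroup_def by blast
    moreover have "(reflection \<circ> g) r = z" using rg t by (simp add: reflection_def circ_in_sphere cnj_circ)
    ultimately show ?thesis using rg(1) by blast
  qed
qed

lemma grid_arcs_subset_cap:
  assumes "k < l" shows "grid_arcs N k \<subseteq> cap (real l / real N)"
proof -
  have "(real k + 1) / real N \<le> real l / real N" using assms by (intro divide_right_mono) auto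
  then show ?thesis unfolding grid_arcs_def cap_def grid_cell_def image_diff_atLeastAtMost
    by (intro image_mono Un_mono) auto
qed

lemma grid_family_covers_cap:
  assumes N: "N > 0" "l \<le> N" and y: "y \<in> cap (real l / real N)"
  shows "\<exists>T\<in>grid_family N. y \<in> T \<and> T \<subseteq> cap (real l / real N)"
proof (cases "l = 0")
  case True
  then have "y = circ 0" "grid_pair N 0 = {circ 0}" using y circ_0 circ_1 by (auto simp: cap_def grid_pair_def)
  moreover have "grid_pair N 0 \<in> grid_family N" using N unfolding grid_family_def by blast
  ultimately show ?thesis using y by auto
next
  case False
  have l1: "real l / real N \<le> 1" using N by (simp add: divide_le_eq_1)
  obtain t where t: "t \<in> {0..real l / real N} \<union> {1 - real l / real N..1}" "y = circ t"
    using y unfolding cap_def by blast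
  obtain k where k: "k < l" "t \<in> grid_cell N k \<union> (\<lambda>s. 1 - s) ` grid_cell N k"
  proof (cases "t \<le> real l / real N")
    case True
    then obtain k where "k < l" "t \<in> grid_cell N k"
      using grid_cell_exists[OF N(1), of l t] \<open>l \<noteq> 0\<close> t l1 by auto
    then show ?thesis using that by blast
  next
    case False
    then obtain k where k: "k < l" "1 - t \<in> grid_cell N k"
      using grid_cell_exists[OF N(1), of l "1 - t"] \<open>l \<noteq> 0\<close> t by auto
    then have "t \<in> (\<lambda>s. 1 - s) ` grid_cell N k" by (intro image_eqI[of _ _ "1 - t"]) auto
    then show ?thesis using that k(1) by blast
  qed
  then have "y \<in> grid_arcs N k" "grid_arcs N k \<in> grid_family N"
    using t N unfolding grid_arcs_def grid_family_def by auto
  then show ?thesis using grid_arcs_subset_cap[OF k(1)] by blast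
qed

lemma cap_1: "cap 1 = S1"
  by (simp add: cap_def circ_image_unit_interval)

lemma divide_nat_simps:
  assumes "N > (0::nat)"
  shows "x / real N < y / real N \<longleftrightarrow> x < y" "x / real N \<le> y / real N \<longleftrightarrow> x \<le> y"
    "x / real N = y / real N \<longleftrightarrow> x = y" "1 - x / real N = (real N - x) / real N"
    "0 < x / real N \<longleftrightarrow> 0 < x" "0 \<le> x / real N \<longleftrightarrow> 0 \<le> x"
    "x / real N < 1 \<longleftrightarrow> x < real N" "x / real N \<le> 1 \<longleftrightarrow> x \<le> real N"
  using assms by (auto simp: field_simps)

definition grid_chain :: "nat \<Rightarrow> nat \<Rightarrow> complex set" where
  "grid_chain N i = (if i < N then cap (real (i div 2) / real N) \<union> grid_pair N ((i + 1) div 2) else S1)"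

lemma cap_subset: "cap r \<subseteq> S1" by (auto simp: cap_def circ_in_sphere)
lemma grid_pair_subset: "grid_pair N k \<subseteq> S1" by (auto simp: grid_pair_def circ_in_sphere)

lemma grid_pair_subset_cap: "grid_pair N l \<subseteq> cap (real l / real N)"
  by (auto simp: grid_pair_def cap_def)

lemma cap_mono: "0 \<le> r \<Longrightarrow> r \<le> r' \<Longrightarrow> cap r \<subseteq> cap r'"
  unfolding cap_def by (intro image_mono) auto

lemma closed_invariant_grid_chain:
  assumes N: "N > 0" and i: "i \<le> N"
  shows "closed_invariant (grid_group N) S1 (grid_chain N i)"
proof -
  have sub: "grid_chain N i \<subseteq> S1" using cap_subset grid_pair_subset by (auto simp: grid_chain_def)
  have ne: "grid_chain N i \<noteq> {}" by (auto simp: grid_chain_def grid_pair_def)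
  have "closed (cap r)" for r unfolding cap_def by (intro compact_imp_closed compact_circ_image) auto
  moreover have "closed (grid_pair N k)" for k unfolding grid_pair_def by (rule finite_imp_closed) auto
  ultimately have cl: "closed (grid_chain N i)" unfolding grid_chain_def by auto
  have "\<exists>T\<in>grid_family N. y \<in> T \<and> T \<subseteq> grid_chain N i" if y: "y \<in> grid_chain N i" for y
  proof (cases "i < N")
    case False
    then have "grid_chain N i = cap (real N / real N)" using N cap_1 by (simp add: grid_chain_def)
    then show ?thesis using grid_family_covers_cap[OF N order_refl] y by auto
  next
    case True
    then have Y: "grid_chain N i = cap (real (i div 2) / real N) \<union> grid_pair N ((i + 1) div 2)"
      by (simp add: grid_chain_def)
    have "(i + 1) div 2 < N" "i div 2 \<le> N" using True by auto
    then show ?thesis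
      using grid_family_covers_cap[OF N(1), of "i div 2" y] y unfolding Y grid_family_def by blast
  qed
  then have "invariant (grid_group N) S1 (grid_chain N i)"
    unfolding grid_group_def by (rule invariant_stabilizerI[OF ne sub])
  then show ?thesis unfolding closed_invariant_def using closedin_S1[OF cl sub] by blast
qed

lemma circ_notin_cap_grid_pair:
  assumes "s \<in> {0<..<1}" "0 \<le> r" "r < s" "s < 1 - r" "k \<le> N" "N > 0"
    "s \<noteq> real k / real N" "s \<noteq> 1 - real k / real N"
  shows "circ s \<notin> cap r \<union> grid_pair N k"
proof
  assume "circ s \<in> cap r \<union> grid_pair N k"
  then obtain c where c: "circ c = circ s" "c \<in> {0..r} \<union> {1 - r..1} \<or> c = real k / real N \<or> c = 1 - real k / real N"
    unfolding cap_def grid_pair_def by auto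
  have "real k \<le> real N" using assms by simp
  then have "real k / real N \<le> 1" using assms(6) by (simp add: divide_le_eq_1)
  moreover have "0 \<le> real k / real N" by simp
  moreover have "r \<le> 1" using assms by simp
  ultimately have "c \<in> {0..1}" using c(2) assms(2) by auto
  then have "c = s" using circ_eq_imp_eq_interior[OF c(1)] assms(1) by blast
  then show False using c(2) assms by auto
qed

lemma grid_chain_strict:
  assumes N: "N > 0" and i: "i < N"
  shows "grid_chain N i \<subset> grid_chain N (Suc i)"
proof (cases "even i")
  case True
  define l where "l = i div 2"
  have il: "i = 2 * l" using True by (simp add: l_def)
  have Yi: "grid_chain N i = cap (real l / real N) \<union> grid_pair N l" using i il by (simp add: grid_chain_def)
  show ?thesis
  proof (cases "Suc i < N")
    case True
    have lN: "2 * real l + 1 < real N" using True il by linarith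
    have Ys: "grid_chain N (Suc i) = cap (real l / real N) \<union> grid_pair N (l + 1)" using True il by (simp add: grid_chain_def)
    have w: "circ (real (l + 1) / real N) \<in> grid_chain N (Suc i)" unfolding Ys grid_pair_def by blast
    have "circ (real (l + 1) / real N) \<notin> cap (real l / real N) \<union> grid_pair N l"
      by (rule circ_notin_cap_grid_pair) (use lN N in \<open>simp_all add: divide_nat_simps\<close>)
    then show ?thesis using w Ys Yi grid_pair_subset_cap by blast
  next
    case False
    then have NN: "2 * real l < real N" using i il by simp
    have Ys: "grid_chain N (Suc i) = S1" using False by (simp add: grid_chain_def)
    have h: "(1::real) / 2 = (real N / 2) / real N" using N by simp
    have "circ ((real N / 2) / real N) \<notin> cap (real l / real N) \<union> grid_pair N l"
      by (rule circ_notin_cap_grid_pair) (use NN N in \<open>simp_all add: divide_nat_simps\<close>)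
    then show ?thesis using Ys Yi cap_subset grid_pair_subset circ_in_sphere by blast
  qed
next
  case False
  define l where "l = i div 2"
  have il: "i = 2 * l + 1" using False by (simp add: l_def)
  have Yi: "grid_chain N i = cap (real l / real N) \<union> grid_pair N (l + 1)" using i il by (simp add: grid_chain_def)
  define s where "s = (real l + 1 / 2) / real N"
  have lN: "2 * real l + 1 < real N \<or> real N = 2 * real l + 2" using i il by linarith
  have par: "real N \<noteq> 2 * real l + 3 / 2"
  proof
    assume "real N = 2 * real l + 3 / 2"
    then have "real (2 * N) = real (4 * l + 3)" by simp
    then have "2 * N = 4 * l + 3" by linarith
    then show False by presburger
  qed
  have ns: "circ s \<notin> cap (real l / real N) \<union> grid_pair N (l + 1)"
    unfolding s_def by (rule circ_notin_cap_grid_pair) (use lN N i il par in \<open>simp_all add: divide_nat_simps\<close>)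
  show ?thesis
  proof (cases "Suc i < N")
    case True
    have Ys: "grid_chain N (Suc i) = cap ((1 + real l) / real N) \<union> grid_pair N (l + 1)" using True il by (simp add: grid_chain_def)
    have "cap (real l / real N) \<subseteq> cap ((1 + real l) / real N)" by (rule cap_mono) (use N in \<open>simp_all add: divide_nat_simps\<close>)
    moreover have "circ s \<in> cap ((1 + real l) / real N)" unfolding cap_def using N by (auto simp: s_def divide_nat_simps)
    ultimately show ?thesis using Ys Yi ns by blast
  next
    case False
    have Ys: "grid_chain N (Suc i) = S1" using False by (simp add: grid_chain_def)
    then show ?thesis using Ys Yi ns cap_subset grid_pair_subset circ_in_sphere by blast
  qed
qed

lemma height_grid_group:
  assumes N: "N > 0" shows "height (grid_group N) S1 = enat N"
proof (rule antisym)
  have "height (grid_group N) S1 \<le> enat (card (grid_reps N) - 1)"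
    by (rule height_le_orbit_representatives[OF homeo_subgroup_grid_group])
      (use grid_reps_subset grid_group_orbit_reps[OF N] in \<open>auto simp: grid_reps_def\<close>)
  then show "height (grid_group N) S1 \<le> enat N" using card_grid_reps[OF N] by simp
  show "enat N \<le> height (grid_group N) S1"
    by (rule height_ge_chain[of N _ _ "grid_chain N"])
      (use closed_invariant_grid_chain[OF N] grid_chain_strict[OF N] in \<open>auto simp: grid_chain_def\<close>)
qed

lemma P_h_S1: "P_h S1 = UNIV"
proof -
  have "h \<in> P_h S1" for h
  proof (cases h)
    case (enat n)
    show ?thesis
    proof (cases n)
      case 0
      then show ?thesis using homeo_subgroup_Homeo height_Homeo_S1 enat unfolding P_h_def
        by (intro CollectI exI[of _ "Homeo S1"]) (simp add: zero_enat_def)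
    next
      case (Suc m)
      then show ?thesis using homeo_subgroup_grid_group height_grid_group[of n] enat unfolding P_h_def
        by (intro CollectI exI[of _ "grid_group n"]) simp
    qed
  next
    case infinity
    then show ?thesis using homeo_subgroup_trivial height_trivial_group_infinite[OF infinite_S1]
      unfolding P_h_def by (intro CollectI exI[of _ "{id}"]) simp
  qed
  then show ?thesis by blast
qed

lemma P_h_homeomorphic_S1:
  assumes "X homeomorphic S1"
  shows "P_h X = range enat \<union> {\<infinity>}"
proof -
  obtain \<phi> \<psi> where "homeomorphism X S1 \<phi> \<psi>" using assms unfolding homeomorphic_def by blast
  then have "P_h X = UNIV" using P_h_subset_homeomorphism P_h_S1 by blast
  moreover have "range enat \<union> {\<infinity>} = (UNIV :: enat set)"
    by (metis UNIV_eq_I Un_iff enat.exhaust insertI1 rangeI)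
  ultimately show ?thesis by simp
qed

section \<open>Points where a space is not locally an open arc\<close>

definition arc_from :: "'a::metric_space set \<Rightarrow> 'a \<Rightarrow> (real \<Rightarrow> 'a) \<Rightarrow> bool" where
  "arc_from X x \<gamma> \<longleftrightarrow> arc \<gamma> \<and> pathstart \<gamma> = x \<and> path_image \<gamma> \<subseteq> X"

definition triod_at :: "'a::metric_space set \<Rightarrow> 'a \<Rightarrow> bool" where
  "triod_at X x \<longleftrightarrow> (\<exists>\<gamma>1 \<gamma>2 \<gamma>3. arc_from X x \<gamma>1 \<and> arc_from X x \<gamma>2 \<and> arc_from X x \<gamma>3 \<and>
     path_image \<gamma>1 \<inter> path_image \<gamma>2 = {x} \<and> path_image \<gamma>1 \<inter> path_image \<gamma>3 = {x} \<and>
     path_image \<gamma>2 \<inter> path_image \<gamma>3 = {x})"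

definition two_arcs_at :: "'a::metric_space set \<Rightarrow> 'a \<Rightarrow> bool" where
  "two_arcs_at X x \<longleftrightarrow> (\<exists>\<gamma>1 \<gamma>2. arc_from X x \<gamma>1 \<and> arc_from X x \<gamma>2 \<and> path_image \<gamma>1 \<inter> path_image \<gamma>2 = {x})"

definition exceptional_points :: "'a::metric_space set \<Rightarrow> 'a set" where
  "exceptional_points X = {x \<in> X. triod_at X x \<or> \<not> two_arcs_at X x}"

lemma arc_from_homeomorphism:
  assumes h: "homeomorphism X X f g" and a: "arc_from X x \<gamma>"
  shows "arc_from X (f x) (f \<circ> \<gamma>)" "path_image (f \<circ> \<gamma>) = f ` path_image \<gamma>"
proof -
  have sub: "path_image \<gamma> \<subseteq> X" and arc: "arc \<gamma>" and st: "pathstart \<gamma> = x"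
    using a unfolding arc_from_def by auto
  have cf: "continuous_on X f" and injf: "inj_on f X" and fX: "f ` X = X"
    using h unfolding homeomorphism_def by (auto intro: inj_on_inverseI)
  have "path (f \<circ> \<gamma>)" unfolding path_def
    using arc_imp_path[OF arc] sub cf unfolding path_def path_image_def
    by (intro continuous_on_compose) (auto intro: continuous_on_subset)
  moreover have "inj_on (f \<circ> \<gamma>) {0..1}"
    using arc_imp_inj_on[OF arc] injf sub unfolding path_image_def
    by (intro comp_inj_on) (auto intro: inj_on_subset)
  ultimately have "arc (f \<circ> \<gamma>)" unfolding arc_def by blast
  moreover show pim: "path_image (f \<circ> \<gamma>) = f ` path_image \<gamma>" by (simp add: path_image_compose)
  ultimately show "arc_from X (f x) (f \<circ> \<gamma>)" unfolding arc_from_def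
    using st sub fX by (auto simp: pathstart_def)
qed

lemma arc_from_meet_homeomorphism:
  assumes h: "homeomorphism X X f g" and \<gamma>: "arc_from X x \<gamma>1" "arc_from X x \<gamma>2"
    and meet: "path_image \<gamma>1 \<inter> path_image \<gamma>2 = {x}"
  shows "path_image (f \<circ> \<gamma>1) \<inter> path_image (f \<circ> \<gamma>2) = {f x}"
proof -
  have "inj_on f X" using h unfolding homeomorphism_def by (auto intro: inj_on_inverseI)
  moreover have "path_image \<gamma>1 \<subseteq> X" "path_image \<gamma>2 \<subseteq> X" using \<gamma> unfolding arc_from_def by auto
  ultimately have "f ` (path_image \<gamma>1 \<inter> path_image \<gamma>2) = f ` path_image \<gamma>1 \<inter> f ` path_image \<gamma>2"
    by (rule inj_on_image_Int)
  then show ?thesis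
    using meet arc_from_homeomorphism(2)[OF h \<gamma>(1)] arc_from_homeomorphism(2)[OF h \<gamma>(2)] by simp
qed

lemma triod_at_homeomorphism:
  assumes h: "homeomorphism X X f g" and t: "triod_at X x"
  shows "triod_at X (f x)"
proof -
  obtain \<gamma>1 \<gamma>2 \<gamma>3 where \<gamma>: "arc_from X x \<gamma>1" "arc_from X x \<gamma>2" "arc_from X x \<gamma>3"
     "path_image \<gamma>1 \<inter> path_image \<gamma>2 = {x}" "path_image \<gamma>1 \<inter> path_image \<gamma>3 = {x}"
     "path_image \<gamma>2 \<inter> path_image \<gamma>3 = {x}" using t unfolding triod_at_def by blast
  show ?thesis unfolding triod_at_def
    using arc_from_homeomorphism(1)[OF h \<gamma>(1)] arc_from_homeomorphism(1)[OF h \<gamma>(2)]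
      arc_from_homeomorphism(1)[OF h \<gamma>(3)] arc_from_meet_homeomorphism[OF h \<gamma>(1,2,4)]
      arc_from_meet_homeomorphism[OF h \<gamma>(1,3,5)] arc_from_meet_homeomorphism[OF h \<gamma>(2,3,6)]
    by blast
qed

lemma two_arcs_at_homeomorphism:
  assumes h: "homeomorphism X X f g" and t: "two_arcs_at X x"
  shows "two_arcs_at X (f x)"
proof -
  obtain \<gamma>1 \<gamma>2 where \<gamma>: "arc_from X x \<gamma>1" "arc_from X x \<gamma>2"
     "path_image \<gamma>1 \<inter> path_image \<gamma>2 = {x}" using t unfolding two_arcs_at_def by blast
  show ?thesis unfolding two_arcs_at_def
    using arc_from_homeomorphism(1)[OF h \<gamma>(1)] arc_from_homeomorphism(1)[OF h \<gamma>(2)]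
      arc_from_meet_homeomorphism[OF h \<gamma>] by blast
qed

lemma exceptional_points_Homeo:
  assumes f: "f \<in> Homeo X" and x: "x \<in> exceptional_points X"
  shows "f x \<in> exceptional_points X"
proof -
  obtain g where h: "homeomorphism X X f g" using f unfolding Homeo_def by blast
  have xX: "x \<in> X" using x unfolding exceptional_points_def by auto
  have fx: "f x \<in> X" "g (f x) = x" using h xX unfolding homeomorphism_def by auto
  have "triod_at X (f x) \<or> \<not> two_arcs_at X (f x)"
    using x triod_at_homeomorphism[OF h, of x] two_arcs_at_homeomorphism[OF homeomorphism_symD[OF h], of "f x"] fx(2)
    unfolding exceptional_points_def by auto
  then show ?thesis using fx unfolding exceptional_points_def by auto
qed

lemma subarcs_meet_off_start:
  fixes c \<gamma>1 \<gamma>2 :: "real \<Rightarrow> 'a::metric_space"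
  assumes c: "arc c" "pathstart c = x"
    and g1: "arc \<gamma>1" "pathstart \<gamma>1 = x" "0 < d1" "d1 \<le> 1" "\<gamma>1 ` {0..d1} \<subseteq> path_image c"
    and g2: "arc \<gamma>2" "pathstart \<gamma>2 = x" "0 < d2" "d2 \<le> 1" "\<gamma>2 ` {0..d2} \<subseteq> path_image c"
  shows "\<exists>y. y \<noteq> x \<and> y \<in> path_image \<gamma>1 \<and> y \<in> path_image \<gamma>2"
proof -
  obtain ci where h: "homeomorphism {0..1} (path_image c) c ci" using homeomorphism_arc[OF c(1)] by blast
  have ci1: "\<And>s. s \<in> {0..1} \<Longrightarrow> ci (c s) = s" and ci2: "\<And>z. z \<in> path_image c \<Longrightarrow> c (ci z) = z"
    and ci3: "\<And>z. z \<in> path_image c \<Longrightarrow> ci z \<in> {0..1}" and cci: "continuous_on (path_image c) ci"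
    using h unfolding homeomorphism_def by auto
  have injc: "inj_on c {0..1}" using arc_imp_inj_on[OF c(1)] .
  have key: "\<exists>t>0. {0..t} \<subseteq> ci ` \<gamma> ` {0..d}"
    if g: "arc \<gamma>" "pathstart \<gamma> = x" "0 < d" "d \<le> 1" "\<gamma> ` {0..d} \<subseteq> path_image c" for \<gamma> d
  proof -
    have "continuous_on {0..1} \<gamma>" using arc_imp_path[OF g(1)] unfolding path_def .
    then have cg: "continuous_on {0..d} \<gamma>" by (rule continuous_on_subset) (use g(4) in auto)
    have conn: "connected (ci ` \<gamma> ` {0..d})"
      by (intro connected_continuous_image continuous_on_subset[OF cci g(5)] connected_continuous_image[OF cg])
        simp
    have "0 \<in> ci ` \<gamma> ` {0..d}"
    proof -
      have "ci (\<gamma> 0) = 0" using g(2) c(2) ci1[of 0] by (simp add: pathstart_def)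
      then show ?thesis using g(3) by force
    qed
    moreover have dd: "\<gamma> d \<in> path_image c" using g(3,5) by auto
    have "ci (\<gamma> d) \<noteq> 0"
    proof
      assume "ci (\<gamma> d) = 0"
      then have "\<gamma> d = c 0" using ci2[OF dd] by metis
      then have "\<gamma> d = \<gamma> 0" using g(2) c(2) by (simp add: pathstart_def)
      then have "d = 0" using arc_imp_inj_on[OF g(1)] g(3,4) unfolding inj_on_def by auto
      then show False using g(3) by simp
    qed
    moreover have "ci (\<gamma> d) \<in> ci ` \<gamma> ` {0..d}" using g(3) by auto
    moreover have "ci (\<gamma> d) \<ge> 0" using ci3[OF dd] by simp
    ultimately show ?thesis using connected_contains_Icc[OF conn] by (metis less_eq_real_def)
  qed
  obtain t1 where t1: "t1 > 0" "{0..t1} \<subseteq> ci ` \<gamma>1 ` {0..d1}" using key[OF g1] by blast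
  obtain t2 where t2: "t2 > 0" "{0..t2} \<subseteq> ci ` \<gamma>2 ` {0..d2}" using key[OF g2] by blast
  define t where "t = min t1 t2"
  have tin: "t \<in> ci ` \<gamma>1 ` {0..d1}" "t \<in> ci ` \<gamma>2 ` {0..d2}" using t1 t2 by (auto simp: t_def)
  obtain w1 where w1: "w1 \<in> \<gamma>1 ` {0..d1}" "t = ci w1" using tin(1) by blast
  obtain w2 where w2: "w2 \<in> \<gamma>2 ` {0..d2}" "t = ci w2" using tin(2) by blast
  have e1: "c t = w1" using ci2 w1 g1(5) by blast
  have e2: "c t = w2" using ci2 w2 g2(5) by blast
  have t01: "t \<in> {0..1}" using ci3 w1 g1(5) by blast
  have "c t \<noteq> x"
  proof
    assume "c t = x"
    then have "c t = c 0" using c(2) by (simp add: pathstart_def)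
    then have "t = 0" using injc t01 unfolding inj_on_def by auto
    then show False using t1 t2 by (simp add: t_def)
  qed
  moreover have "c t \<in> path_image \<gamma>1" using e1 w1 g1(4) unfolding path_image_def by auto
  moreover have "c t \<in> path_image \<gamma>2" using e2 w2 g2(4) unfolding path_image_def by auto
  ultimately show ?thesis by blast
qed

lemma arc_initial_segment_in_ball:
  fixes \<gamma> :: "real \<Rightarrow> 'a::metric_space"
  assumes "arc \<gamma>" "pathstart \<gamma> = x" "r > 0"
  shows "\<exists>d. 0 < d \<and> d \<le> 1 \<and> \<gamma> ` {0..d} \<subseteq> ball x r"
proof -
  have "continuous_on {0..1} \<gamma>" using arc_imp_path[OF assms(1)] unfolding path_def .
  then obtain e where e: "e > 0" "\<forall>s\<in>{0..1}. dist s 0 < e \<longrightarrow> dist (\<gamma> s) (\<gamma> 0) < r"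
    using assms(3) unfolding continuous_on_iff by (metis atLeastAtMost_iff order_refl zero_le_one)
  define d where "d = min (e / 2) 1"
  have "\<gamma> ` {0..d} \<subseteq> ball x r"
  proof
    fix z assume "z \<in> \<gamma> ` {0..d}"
    then obtain s where s: "s \<in> {0..d}" "z = \<gamma> s" by blast
    have "dist s 0 < e" using s e by (auto simp: d_def)
    then have "dist (\<gamma> s) (\<gamma> 0) < r" using e s by (auto simp: d_def)
    then show "z \<in> ball x r" using s assms(2) by (simp add: pathstart_def dist_commute)
  qed
  then show ?thesis using e by (intro exI[of _ d]) (auto simp: d_def)
qed

lemma arc_initial_segment_in_branch:
  fixes \<gamma> :: "real \<Rightarrow> 'a::metric_space"
  assumes g: "arc_from X x \<gamma>" and r: "r > 0" "X \<inter> ball x r \<subseteq> K1 \<union> K2"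
    and K: "closed K1" "closed K2" "K1 \<inter> K2 = {x}"
  shows "\<exists>d. 0 < d \<and> d \<le> 1 \<and> (\<gamma> ` {0..d} \<subseteq> K1 \<or> \<gamma> ` {0..d} \<subseteq> K2)"
proof -
  have arc: "arc \<gamma>" and st: "pathstart \<gamma> = x" and sub: "path_image \<gamma> \<subseteq> X"
    using g unfolding arc_from_def by auto
  obtain d where d: "0 < d" "d \<le> 1" "\<gamma> ` {0..d} \<subseteq> ball x r" using arc_initial_segment_in_ball[OF arc st r(1)] by blast
  have inX: "\<gamma> ` {0..d} \<subseteq> X" using sub d unfolding path_image_def by auto
  have inK: "\<gamma> ` {0..d} \<subseteq> K1 \<union> K2" using inX d r by blast
  define S where "S = \<gamma> ` {0<..d}"
  have conn: "connected S" unfolding S_def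
    using arc_imp_path[OF arc] d unfolding path_def
    by (intro connected_continuous_image) (auto intro: continuous_on_subset)
  have xS: "x \<notin> S"
  proof
    assume "x \<in> S"
    then obtain s where s: "s \<in> {0<..d}" "\<gamma> s = \<gamma> 0" using st unfolding S_def pathstart_def by auto
    then have "s = 0" using arc_imp_inj_on[OF arc] d unfolding inj_on_def by auto
    then show False using s by simp
  qed
  have "S \<subseteq> \<gamma> ` {0..d}" unfolding S_def by (rule image_mono) auto
  then have SK: "S \<subseteq> K1 \<union> K2" using inK by blast
  have "S \<subseteq> K1 \<or> S \<subseteq> K2"
  proof (rule ccontr)
    assume "\<not> (S \<subseteq> K1 \<or> S \<subseteq> K2)"
    then have "K1 \<inter> S \<noteq> {}" "K2 \<inter> S \<noteq> {}" using SK by auto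
    moreover have "K1 \<inter> K2 \<inter> S = {}" using K(3) xS by auto
    ultimately show False using conn K SK unfolding connected_closed by blast
  qed
  moreover have "\<gamma> ` {0..d} = insert x S"
  proof -
    have "{0..d} = insert 0 {0<..d}" using d by auto
    then show ?thesis using st by (simp add: S_def pathstart_def)
  qed
  moreover have "x \<in> K1" "x \<in> K2" using K(3) by auto
  ultimately have "\<gamma> ` {0..d} \<subseteq> K1 \<or> \<gamma> ` {0..d} \<subseteq> K2" by auto
  then show ?thesis using d by blast
qed

lemma regular_if_two_branches:
  fixes c1 c2 :: "real \<Rightarrow> 'a::metric_space"
  assumes c: "arc_from X x c1" "arc_from X x c2" "path_image c1 \<inter> path_image c2 = {x}"
    and r: "r > 0" "X \<inter> ball x r \<subseteq> path_image c1 \<union> path_image c2"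
  shows "\<not> triod_at X x" "two_arcs_at X x"
proof -
  show "two_arcs_at X x" unfolding two_arcs_at_def using c by blast
  have cl: "closed (path_image c1)" "closed (path_image c2)"
    using c unfolding arc_from_def by (auto intro: closed_path_image arc_imp_path)
  have br: "\<exists>d. 0 < d \<and> d \<le> 1 \<and> (\<gamma> ` {0..d} \<subseteq> path_image c1 \<or> \<gamma> ` {0..d} \<subseteq> path_image c2)"
    if "arc_from X x \<gamma>" for \<gamma>
    by (rule arc_initial_segment_in_branch[OF that r cl c(3)])
  have same: "\<exists>y. y \<noteq> x \<and> y \<in> path_image \<gamma> \<and> y \<in> path_image \<gamma>'"
    if g: "arc_from X x \<gamma>" "arc_from X x \<gamma>'" and cc: "arc_from X x c"
      and d: "0 < d" "d \<le> 1" "\<gamma> ` {0..d} \<subseteq> path_image c"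
      and d': "0 < d'" "d' \<le> 1" "\<gamma>' ` {0..d'} \<subseteq> path_image c" for \<gamma> \<gamma>' c d d'
    using subarcs_meet_off_start[of c x \<gamma> d \<gamma>' d'] g cc d d' unfolding arc_from_def by auto
  show "\<not> triod_at X x"
  proof
    assume "triod_at X x"
    then obtain \<gamma>1 \<gamma>2 \<gamma>3 where g: "arc_from X x \<gamma>1" "arc_from X x \<gamma>2" "arc_from X x \<gamma>3"
     "path_image \<gamma>1 \<inter> path_image \<gamma>2 = {x}" "path_image \<gamma>1 \<inter> path_image \<gamma>3 = {x}"
     "path_image \<gamma>2 \<inter> path_image \<gamma>3 = {x}" unfolding triod_at_def by blast
    obtain d1 where d1: "0 < d1" "d1 \<le> 1" "\<gamma>1 ` {0..d1} \<subseteq> path_image c1 \<or> \<gamma>1 ` {0..d1} \<subseteq> path_image c2"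
      using br[OF g(1)] by blast
    obtain d2 where d2: "0 < d2" "d2 \<le> 1" "\<gamma>2 ` {0..d2} \<subseteq> path_image c1 \<or> \<gamma>2 ` {0..d2} \<subseteq> path_image c2"
      using br[OF g(2)] by blast
    obtain d3 where d3: "0 < d3" "d3 \<le> 1" "\<gamma>3 ` {0..d3} \<subseteq> path_image c1 \<or> \<gamma>3 ` {0..d3} \<subseteq> path_image c2"
      using br[OF g(3)] by blast
    have no: False if "arc_from X x \<gamma>" "arc_from X x \<gamma>'" "path_image \<gamma> \<inter> path_image \<gamma>' = {x}"
      "0 < d" "d \<le> 1" "0 < d'" "d' \<le> 1"
      "(\<gamma> ` {0..d} \<subseteq> path_image c1 \<and> \<gamma>' ` {0..d'} \<subseteq> path_image c1) \<or>
       (\<gamma> ` {0..d} \<subseteq> path_image c2 \<and> \<gamma>' ` {0..d'} \<subseteq> path_image c2)" for \<gamma> \<gamma>' d d'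
      using that(8)
    proof
      assume "\<gamma> ` {0..d} \<subseteq> path_image c1 \<and> \<gamma>' ` {0..d'} \<subseteq> path_image c1"
      then show False using same[OF that(1,2) c(1) that(4,5) _ that(6,7)] that(3) by blast
    next
      assume "\<gamma> ` {0..d} \<subseteq> path_image c2 \<and> \<gamma>' ` {0..d'} \<subseteq> path_image c2"
      then show False using same[OF that(1,2) c(2) that(4,5) _ that(6,7)] that(3) by blast
    qed
    show False
      using d1 d2 d3 no[OF g(1) g(2) g(4) d1(1,2) d2(1,2)] no[OF g(1) g(3) g(5) d1(1,2) d3(1,2)]
        no[OF g(2) g(3) g(6) d2(1,2) d3(1,2)] by blast
  qed
qed

lemma not_two_arcs_if_one_branch:
  fixes c :: "real \<Rightarrow> 'a::metric_space"
  assumes c: "arc_from X x c" and r: "r > 0" "X \<inter> ball x r \<subseteq> path_image c"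
  shows "\<not> two_arcs_at X x"
proof
  assume "two_arcs_at X x"
  then obtain \<gamma>1 \<gamma>2 where g: "arc_from X x \<gamma>1" "arc_from X x \<gamma>2" "path_image \<gamma>1 \<inter> path_image \<gamma>2 = {x}"
    unfolding two_arcs_at_def by blast
  have in1: "\<exists>d. 0 < d \<and> d \<le> 1 \<and> \<gamma> ` {0..d} \<subseteq> path_image c" if "arc_from X x \<gamma>" for \<gamma>
  proof -
    have "arc \<gamma>" "pathstart \<gamma> = x" using that unfolding arc_from_def by auto
    then obtain d where d: "0 < d" "d \<le> 1" "\<gamma> ` {0..d} \<subseteq> ball x r"
      using arc_initial_segment_in_ball[of \<gamma> x r] r by blast
    have "\<gamma> ` {0..d} \<subseteq> X" using that d unfolding arc_from_def path_image_def by auto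
    then show ?thesis using d r by blast
  qed
  obtain d1 where d1: "0 < d1" "d1 \<le> 1" "\<gamma>1 ` {0..d1} \<subseteq> path_image c" using in1[OF g(1)] by blast
  obtain d2 where d2: "0 < d2" "d2 \<le> 1" "\<gamma>2 ` {0..d2} \<subseteq> path_image c" using in1[OF g(2)] by blast
  show False using subarcs_meet_off_start[of c x \<gamma>1 d1 \<gamma>2 d2] g c d1 d2 unfolding arc_from_def by auto
qed

section \<open>Topological graphs\<close>

definition restrict_path :: "real \<Rightarrow> real \<Rightarrow> (real \<Rightarrow> 'a) \<Rightarrow> real \<Rightarrow> 'a" where
  "restrict_path a b g = (\<lambda>x. g ((b - a) * x + a))"

lemma restrict_path_0 [simp]: "restrict_path u v g 0 = g u" by (simp add: restrict_path_def)
lemma restrict_path_1 [simp]: "restrict_path u v g 1 = g v" by (simp add: restrict_path_def)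
lemma pathstart_restrict_path [simp]: "pathstart (restrict_path u v g) = g u" by (simp add: restrict_path_def pathstart_def)
lemma pathfinish_restrict_path [simp]: "pathfinish (restrict_path u v g) = g v" by (simp add: restrict_path_def pathfinish_def)

lemma path_image_restrict_path: "path_image (restrict_path u v g) = g ` closed_segment u v"
  by (auto simp add: closed_segment_real_eq path_image_def restrict_path_def)

lemma path_image_restrict_path_le: "u \<le> v \<Longrightarrow> path_image (restrict_path u v g) = g ` {u..v}"
  by (simp add: path_image_restrict_path closed_segment_eq_real_ivl)

lemma path_image_restrict_path_ge: "v \<le> u \<Longrightarrow> path_image (restrict_path u v g) = g ` {v..u}"
  by (simp add: path_image_restrict_path closed_segment_eq_real_ivl)

lemma arc_restrict_path:
  fixes g :: "real \<Rightarrow> 'a::topological_space"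
  assumes a: "arc g" and uv: "u \<in> {0..1}" "v \<in> {0..1}" "u \<noteq> v"
  shows "arc (restrict_path u v g)"
proof -
  have seg: "(\<lambda>x. (v - u) * x + u) ` {0..1} = closed_segment u v" by (simp add: closed_segment_real_eq)
  have segsub: "closed_segment u v \<subseteq> {0..1}" using uv by (auto simp: closed_segment_eq_real_ivl split: if_splits)
  have "continuous_on {0..1} g" using arc_imp_path[OF a] unfolding path_def .
  moreover have "continuous_on {0..1} (\<lambda>x. (v - u) * x + u)" by (intro continuous_intros)
  moreover have imsub: "(\<lambda>x. (v - u) * x + u) ` {0..1} \<subseteq> {0..1}" using seg segsub by simp
  ultimately have "continuous_on {0..1} (\<lambda>x. g ((v - u) * x + u))"
    by (rule continuous_on_compose2)
  then have "path (restrict_path u v g)" unfolding path_def restrict_path_def .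
  moreover have "inj_on (restrict_path u v g) {0..1}"
  proof (rule inj_onI)
    fix x y :: real assume xy: "x \<in> {0..1}" "y \<in> {0..1}" "restrict_path u v g x = restrict_path u v g y"
    have "(v - u) * x + u \<in> {0..1}" "(v - u) * y + u \<in> {0..1}"
      using imsub imageI[OF xy(1), of "\<lambda>x. (v - u) * x + u"] imageI[OF xy(2), of "\<lambda>x. (v - u) * x + u"] by auto
    then have "(v - u) * x + u = (v - u) * y + u" using arc_imp_inj_on[OF a] xy(3) unfolding restrict_path_def inj_on_def by blast
    then show "x = y" using uv(3) by simp
  qed
  ultimately show ?thesis unfolding arc_def by blast
qed

lemma arc_split_at:
  fixes e :: "real \<Rightarrow> 'a::topological_space"
  assumes a: "arc e" and s: "0 < s" "s < 1"
  shows "arc (restrict_path s 0 e)" "arc (restrict_path s 1 e)"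
    "path_image (restrict_path s 0 e) \<union> path_image (restrict_path s 1 e) = path_image e"
    "path_image (restrict_path s 0 e) \<inter> path_image (restrict_path s 1 e) = {e s}"
proof -
  show "arc (restrict_path s 0 e)" "arc (restrict_path s 1 e)"
    using s by (auto intro!: arc_restrict_path[OF a])
  have im: "path_image (restrict_path s 0 e) = e ` {0..s}" "path_image (restrict_path s 1 e) = e ` {s..1}"
    using s by (auto simp: path_image_restrict_path_le path_image_restrict_path_ge)
  have "{0..1::real} = {0..s} \<union> {s..1}" using s by auto
  then show "path_image (restrict_path s 0 e) \<union> path_image (restrict_path s 1 e) = path_image e"
    unfolding im path_image_def[of e] by (simp add: image_Un)
  show "path_image (restrict_path s 0 e) \<inter> path_image (restrict_path s 1 e) = {e s}"
  proof (intro antisym subsetI)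
    fix z assume "z \<in> path_image (restrict_path s 0 e) \<inter> path_image (restrict_path s 1 e)"
    then obtain p q where pq: "p \<in> {0..s}" "q \<in> {s..1}" "z = e p" "z = e q" unfolding im by blast
    then have "p = q" using arc_imp_inj_on[OF a] s unfolding inj_on_def by auto
    then show "z \<in> {e s}" using pq by auto
  qed (use s im in auto)
qed

lemma ends_subset_path_image: "ends e \<subseteq> path_image e"
  by (auto simp: ends_def)

lemma topological_graphD:
  assumes "topological_graph X E"
  shows "compact X" "connected X" "finite E" "E \<noteq> {}" "\<And>e. e \<in> E \<Longrightarrow> arc e"
    "X = (\<Union>e\<in>E. path_image e)"
    "\<And>e1 e2. e1 \<in> E \<Longrightarrow> e2 \<in> E \<Longrightarrow> e1 \<noteq> e2 \<Longrightarrow> path_image e1 \<inter> path_image e2 \<subseteq> ends e1 \<inter> ends e2"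
  using assms unfolding topological_graph_def by auto

lemma infinite_path_image_arc: "arc e \<Longrightarrow> infinite (path_image e)"
proof
  assume a: "arc e" and f: "finite (path_image e)"
  have "finite {0..1::real}" using finite_imageD[OF f[unfolded path_image_def] arc_imp_inj_on[OF a]] .
  then show False using infinite_Icc[of "0::real" 1] by simp
qed

lemma arc_reorient:
  assumes "arc e" "v \<in> ends e"
  obtains e' where "arc e'" "pathstart e' = v" "path_image e' = path_image e" "ends e' = ends e"
proof (cases "v = pathstart e")
  case True
  then show ?thesis using that assms by blast
next
  case False
  then have "v = pathfinish e" using assms unfolding ends_def by auto
  then show ?thesis using that[of "reversepath e"] assms
    by (auto simp: arc_reversepath ends_def)
qed

lemma half_arc:
  assumes a: "arc e"
  shows "arc (restrict_path 0 (1/2) e)" "pathstart (restrict_path 0 (1/2) e) = pathstart e"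
    "path_image (restrict_path 0 (1/2) e) \<subseteq> path_image e"
    "pathfinish e \<notin> path_image (restrict_path 0 (1/2) e)"
    "closed (e ` {1/2..1})" "pathstart e \<notin> e ` {1/2..1}"
    "path_image e = path_image (restrict_path 0 (1/2) e) \<union> e ` {1/2..1}"
    "arc_from X (pathstart e) e \<Longrightarrow> arc_from X (pathstart e) (restrict_path 0 (1/2) e)"
proof -
  have inj: "inj_on e {0..1}" using arc_imp_inj_on[OF a] .
  have pim: "path_image (restrict_path 0 (1/2) e) = e ` {0..1/2}" by (simp add: path_image_restrict_path_le)
  show arc1: "arc (restrict_path 0 (1/2) e)" by (rule arc_restrict_path[OF a]) auto
  show "pathstart (restrict_path 0 (1/2) e) = pathstart e" by (simp add: pathstart_def)
  show sub: "path_image (restrict_path 0 (1/2) e) \<subseteq> path_image e" unfolding pim by (auto simp: path_image_def)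
  show "pathfinish e \<notin> path_image (restrict_path 0 (1/2) e)"
  proof
    assume "pathfinish e \<in> path_image (restrict_path 0 (1/2) e)"
    then obtain s where "s \<in> {0..1/2}" "e s = e 1" unfolding pim pathfinish_def by auto
    then show False using inj unfolding inj_on_def by force
  qed
  show "closed (e ` {1/2..1})"
    using arc_imp_path[OF a] unfolding path_def
    by (intro compact_imp_closed compact_continuous_image) (auto intro: continuous_on_subset)
  show "pathstart e \<notin> e ` {1/2..1}"
  proof
    assume "pathstart e \<in> e ` {1/2..1}"
    then obtain s where "s \<in> {1/2..1}" "e s = e 0" unfolding pathstart_def by auto
    then show False using inj unfolding inj_on_def by force
  qed
  show "path_image e = path_image (restrict_path 0 (1/2) e) \<union> e ` {1/2..1}"
  proof -
    have "{0..1::real} = {0..1/2} \<union> {1/2..1}" by auto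
    then have "path_image e = e ` ({0..1/2} \<union> {1/2..1})" unfolding path_image_def by simp
    then show ?thesis unfolding pim by (simp add: image_Un)
  qed
  show "arc_from X (pathstart e) e \<Longrightarrow> arc_from X (pathstart e) (restrict_path 0 (1/2) e)"
    using arc1 sub by (auto simp: arc_from_def pathstart_def)
qed

lemma ball_disjoint_closed:
  fixes x :: "'a::metric_space"
  assumes "closed C" "x \<notin> C"
  shows "\<exists>r>0. ball x r \<inter> C = {}"
proof -
  have "open (- C)" using assms(1) by auto
  then obtain r where "r > 0" "ball x r \<subseteq> - C" using assms(2) unfolding open_contains_ball by blast
  then show ?thesis by blast
qed

lemma vertex_on_edge_imp_end:
  assumes tg: "topological_graph X E" and v: "v \<in> graph_vertices E" and e: "e \<in> E" "v \<in> path_image e"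
  shows "v \<in> ends e"
proof -
  obtain e' where e': "e' \<in> E" "v \<in> ends e'" using v unfolding graph_vertices_def by blast
  show ?thesis
  proof (cases "e' = e")
    case False
    then show ?thesis using topological_graphD(7)[OF tg e(1) e'(1)] e' e ends_subset_path_image by blast
  qed (use e' in auto)
qed

lemma neighbourhood_in_incident_edges:
  assumes tg: "topological_graph X E" and x: "x \<in> X"
  shows "\<exists>r>0. X \<inter> ball x r \<subseteq> (\<Union>e\<in>{e\<in>E. x \<in> path_image e}. path_image e)"
proof -
  define C where "C = (\<Union>e\<in>{e\<in>E. x \<notin> path_image e}. path_image e)"
  have "closed C" unfolding C_def using topological_graphD(3)[OF tg] topological_graphD(5)[OF tg]
    by (intro closed_UN) (auto intro: closed_path_image arc_imp_path)
  moreover have "x \<notin> C" unfolding C_def by auto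
  ultimately obtain r where r: "r > 0" "ball x r \<inter> C = {}" using ball_disjoint_closed by blast
  have "X \<inter> ball x r \<subseteq> (\<Union>e\<in>{e\<in>E. x \<in> path_image e}. path_image e)"
  proof
    fix y assume y: "y \<in> X \<inter> ball x r"
    then obtain e where e: "e \<in> E" "y \<in> path_image e" using topological_graphD(6)[OF tg] by blast
    have "x \<in> path_image e" using r y e unfolding C_def by blast
    then show "y \<in> (\<Union>e\<in>{e\<in>E. x \<in> path_image e}. path_image e)" using e by blast
  qed
  then show ?thesis using r by blast
qed

lemma half_edges_Int:
  assumes tg: "topological_graph X E" and e: "e1 \<in> E" "e2 \<in> E" "e1 \<noteq> e2"
    and o1: "arc e1'" "pathstart e1' = v" "path_image e1' = path_image e1" "ends e1' = ends e1"
    and o2: "arc e2'" "pathstart e2' = v" "path_image e2' = path_image e2" "ends e2' = ends e2"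
  shows "path_image (restrict_path 0 (1/2) e1') \<inter> path_image (restrict_path 0 (1/2) e2') = {v}"
proof (intro antisym subsetI)
  fix z assume z: "z \<in> path_image (restrict_path 0 (1/2) e1') \<inter> path_image (restrict_path 0 (1/2) e2')"
  have "z \<in> path_image e1 \<inter> path_image e2" using z half_arc(3)[OF o1(1)] half_arc(3)[OF o2(1)] o1 o2 by auto
  then have "z \<in> ends e1' \<inter> ends e2'" using topological_graphD(7)[OF tg e] o1 o2 by auto
  moreover have "z \<noteq> pathfinish e1'" using z half_arc(4)[OF o1(1)] by auto
  ultimately show "z \<in> {v}" using o1 unfolding ends_def by auto
next
  fix z assume "z \<in> {v}"
  have "pathstart e1' \<in> path_image (restrict_path 0 (1/2) e1')" "pathstart e2' \<in> path_image (restrict_path 0 (1/2) e2')"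
    using pathstart_in_path_image[of "restrict_path 0 (1/2) e1'"] pathstart_in_path_image[of "restrict_path 0 (1/2) e2'"]
    by (simp_all add: pathstart_def)
  then show "z \<in> path_image (restrict_path 0 (1/2) e1') \<inter> path_image (restrict_path 0 (1/2) e2')"
    using o1 o2 \<open>z \<in> {v}\<close> by auto
qed

lemma edges_through_vertex:
  assumes tg: "topological_graph X E" and v: "v \<in> graph_vertices E"
  shows "{e\<in>E. v \<in> path_image e} = {e\<in>E. v \<in> ends e}"
  using vertex_on_edge_imp_end[OF tg v] ends_subset_path_image by blast

lemma non_vertex_not_exceptional:
  assumes tg: "topological_graph X E" and x: "x \<in> X" "x \<notin> graph_vertices E"
  shows "x \<notin> exceptional_points X"
proof -
  obtain e where e: "e \<in> E" "x \<in> path_image e" using x topological_graphD(6)[OF tg] by blast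
  have a: "arc e" using topological_graphD(5)[OF tg e(1)] .
  obtain s where s: "s \<in> {0..1}" "x = e s" using e(2) unfolding path_image_def by blast
  have "s \<noteq> 0" "s \<noteq> 1"
    using s x e(1) unfolding graph_vertices_def ends_def pathstart_def pathfinish_def by auto
  then have s01: "0 < s" "s < 1" using s(1) by auto
  have only_e: "{e\<in>E. x \<in> path_image e} = {e}"
  proof (intro antisym subsetI)
    fix e' assume "e' \<in> {e\<in>E. x \<in> path_image e}"
    then have "e' = e \<or> x \<in> ends e" using topological_graphD(7)[OF tg e(1)] e by blast
    then show "e' \<in> {e}" using x(2) e(1) unfolding graph_vertices_def by blast
  qed (use e in auto)
  obtain r where r: "r > 0" "X \<inter> ball x r \<subseteq> path_image e"
    using neighbourhood_in_incident_edges[OF tg x(1)] unfolding only_e by auto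
  have "path_image e \<subseteq> X" using topological_graphD(6)[OF tg] e(1) by blast
  then have "arc_from X x (restrict_path s 0 e)" "arc_from X x (restrict_path s 1 e)"
    using arc_split_at[OF a s01] s(2) unfolding arc_from_def by auto
  then have "\<not> triod_at X x" "two_arcs_at X x"
    using regular_if_two_branches[of X x _ _ r] arc_split_at[OF a s01] r s(2) by auto
  then show ?thesis unfolding exceptional_points_def by auto
qed

lemma finite_incident_edges: "topological_graph X E \<Longrightarrow> finite {e\<in>E. v \<in> ends e}"
  by (drule topological_graphD(3)) simp

lemma finite_graph_vertices: "topological_graph X E \<Longrightarrow> finite (graph_vertices E)"
  unfolding graph_vertices_def by (drule topological_graphD(3)) (auto simp: ends_def)

lemma graph_vertex_in_space: "topological_graph X E \<Longrightarrow> v \<in> graph_vertices E \<Longrightarrow> v \<in> X"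
  unfolding graph_vertices_def using topological_graphD(6) ends_subset_path_image by blast

lemma edge_arc_fromE:
  assumes tg: "topological_graph X E" and e: "e \<in> E" and v: "v \<in> ends e"
  obtains e' where "arc e'" "pathstart e' = v" "path_image e' = path_image e" "ends e' = ends e"
    "arc_from X v e'"
proof -
  obtain e' where o: "arc e'" "pathstart e' = v" "path_image e' = path_image e" "ends e' = ends e"
    using arc_reorient[OF topological_graphD(5)[OF tg e] v] by blast
  have "path_image e \<subseteq> X" using topological_graphD(6)[OF tg] e by blast
  then have "arc_from X v e'" using o unfolding arc_from_def by auto
  then show ?thesis using that o by blast
qed

lemma neighbourhood_of_vertex:
  assumes tg: "topological_graph X E" and v: "v \<in> graph_vertices E"
  shows "\<exists>r>0. X \<inter> ball v r \<subseteq> (\<Union>e\<in>{e\<in>E. v \<in> ends e}. path_image e)"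
  using neighbourhood_in_incident_edges[OF tg graph_vertex_in_space[OF tg v]] edges_through_vertex[OF tg v] by simp

lemma degree_1_exceptional:
  assumes tg: "topological_graph X E" and v: "v \<in> graph_vertices E" and d: "graph_degree E v = 1"
  shows "v \<in> exceptional_points X"
proof -
  have "card {e\<in>E. v \<in> ends e} = Suc 0" using d by (simp add: graph_degree_def)
  then obtain e1 where A: "{e\<in>E. v \<in> ends e} = {e1}"
    unfolding card_1_singleton_iff by blast
  have e: "e1 \<in> E" "v \<in> ends e1" using A(1) by blast+
  obtain e1' where o1: "arc e1'" "pathstart e1' = v" "path_image e1' = path_image e1" "ends e1' = ends e1"
    "arc_from X v e1'" using edge_arc_fromE[OF tg e(1,2)] by blast
  obtain r1 where r1: "r1 > 0" "X \<inter> ball v r1 \<subseteq> path_image e1"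
    using neighbourhood_of_vertex[OF tg v] A(1) by auto
  have "\<not> two_arcs_at X v" by (rule not_two_arcs_if_one_branch[OF o1(5) r1(1)]) (use r1 o1 in auto)
  then show ?thesis using graph_vertex_in_space[OF tg v] unfolding exceptional_points_def by auto
qed

lemma card_ge_3_imp_three_distinct:
  assumes "finite A" "3 \<le> card A"
  shows "\<exists>a b c. a \<in> A \<and> b \<in> A \<and> c \<in> A \<and> a \<noteq> b \<and> a \<noteq> c \<and> b \<noteq> c"
proof -
  obtain B where B: "B \<subseteq> A" "card B = 3" using obtain_subset_with_card_n[OF assms(2)] by metis
  then obtain a b c where "B = {a, b, c}" "a \<noteq> b" "b \<noteq> c" "a \<noteq> c" unfolding card_3_iff by blast
  then show ?thesis using B(1) by blast
qed

lemma degree_ge_3_exceptional: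
  assumes tg: "topological_graph X E" and v: "v \<in> graph_vertices E" and d: "graph_degree E v \<ge> 3"
  shows "v \<in> exceptional_points X"
proof -
  obtain e1 e2 e3 where A: "e1 \<in> {e\<in>E. v \<in> ends e}" "e2 \<in> {e\<in>E. v \<in> ends e}" "e3 \<in> {e\<in>E. v \<in> ends e}"
    "e1 \<noteq> e2" "e1 \<noteq> e3" "e2 \<noteq> e3"
    using card_ge_3_imp_three_distinct[OF finite_incident_edges[OF tg] d[unfolded graph_degree_def]] by blast
  have e: "e1 \<in> E" "v \<in> ends e1" "e2 \<in> E" "v \<in> ends e2" "e3 \<in> E" "v \<in> ends e3" using A by blast+
  obtain e1' where o1: "arc e1'" "pathstart e1' = v" "path_image e1' = path_image e1" "ends e1' = ends e1"
    "arc_from X v e1'" using edge_arc_fromE[OF tg e(1,2)] by blast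
  obtain e2' where o2: "arc e2'" "pathstart e2' = v" "path_image e2' = path_image e2" "ends e2' = ends e2"
    "arc_from X v e2'" using edge_arc_fromE[OF tg e(3,4)] by blast
  obtain e3' where o3: "arc e3'" "pathstart e3' = v" "path_image e3' = path_image e3" "ends e3' = ends e3"
    "arc_from X v e3'" using edge_arc_fromE[OF tg e(5,6)] by blast
  have "arc_from X v (restrict_path 0 (1/2) e1')" "arc_from X v (restrict_path 0 (1/2) e2')" "arc_from X v (restrict_path 0 (1/2) e3')"
    using half_arc(8)[OF o1(1)] half_arc(8)[OF o2(1)] half_arc(8)[OF o3(1)] o1 o2 o3 by auto
  moreover have "path_image (restrict_path 0 (1/2) e1') \<inter> path_image (restrict_path 0 (1/2) e2') = {v}"
    by (rule half_edges_Int[OF tg e(1) e(3) A(4) o1(1-4) o2(1-4)])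
  moreover have "path_image (restrict_path 0 (1/2) e1') \<inter> path_image (restrict_path 0 (1/2) e3') = {v}"
    by (rule half_edges_Int[OF tg e(1) e(5) A(5) o1(1-4) o3(1-4)])
  moreover have "path_image (restrict_path 0 (1/2) e2') \<inter> path_image (restrict_path 0 (1/2) e3') = {v}"
    by (rule half_edges_Int[OF tg e(3) e(5) A(6) o2(1-4) o3(1-4)])
  ultimately have "triod_at X v" unfolding triod_at_def by blast
  then show ?thesis using graph_vertex_in_space[OF tg v] unfolding exceptional_points_def by auto
qed

lemma exceptional_points_subset_vertices:
  assumes tg: "topological_graph X E"
  shows "exceptional_points X \<subseteq> graph_vertices E"
  using non_vertex_not_exceptional[OF tg] unfolding exceptional_points_def by blast

lemma infinite_topological_graph:
  assumes tg: "topological_graph X E" shows "infinite X"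
proof -
  obtain e where e: "e \<in> E" using topological_graphD(4)[OF tg] by blast
  then have "path_image e \<subseteq> X" using topological_graphD(6)[OF tg] by blast
  then show ?thesis using infinite_path_image_arc[OF topological_graphD(5)[OF tg e]] infinite_super by blast
qed

lemma exceptional_if_degree_ne_2:
  assumes tg: "topological_graph X E" and v: "v \<in> graph_vertices E" "graph_degree E v \<noteq> 2"
  shows "v \<in> exceptional_points X"
proof -
  obtain e where "e \<in> E" "v \<in> ends e" using v(1) unfolding graph_vertices_def by blast
  then have "graph_degree E v \<noteq> 0"
    unfolding graph_degree_def using finite_incident_edges[OF tg] by auto
  then have "graph_degree E v = 1 \<or> graph_degree E v \<ge> 3" using v(2) by linarith
  then show ?thesis using degree_1_exceptional[OF tg v(1)] degree_ge_3_exceptional[OF tg v(1)] by blast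
qed

lemma degree_2_if_height_0:
  assumes tg: "topological_graph X E" and height0: "0 \<in> P_h X"
  shows "\<forall>v\<in>graph_vertices E. graph_degree E v = 2"
proof (rule ccontr)
  assume "\<not> (\<forall>v\<in>graph_vertices E. graph_degree E v = 2)"
  then have ne: "exceptional_points X \<noteq> {}" using exceptional_if_degree_ne_2[OF tg] by blast
  obtain G where G: "homeo_subgroup G X" "height G X = 0" using height0 unfolding P_h_def by auto
  have fin: "finite (exceptional_points X)"
    using exceptional_points_subset_vertices[OF tg] finite_graph_vertices[OF tg] finite_subset by blast
  have sub: "exceptional_points X \<subseteq> X" unfolding exceptional_points_def by auto
  have "\<forall>g\<in>G. \<forall>y\<in>exceptional_points X. g y \<in> exceptional_points X"
    using G(1) exceptional_points_Homeo unfolding homeo_subgroup_def by blast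
  then have "closed_invariant G X (exceptional_points X)"
    using ne sub closed_subset[OF sub finite_imp_closed[OF fin]]
    unfolding closed_invariant_def invariant_def by blast
  moreover have "exceptional_points X \<noteq> X" using fin infinite_topological_graph[OF tg] by auto
  ultimately show False using height_pos_if_proper_closed_invariant[OF G(1)] G(2) by simp
qed

lemma degree_2_edgesE:
  assumes tg: "topological_graph X E" and e: "e \<in> E" "v \<in> ends e" and d: "graph_degree E v = 2"
  obtains e' where "e' \<in> E" "e' \<noteq> e" "{f\<in>E. v \<in> ends f} = {e, e'}"
proof -
  obtain x y where xy: "{f\<in>E. v \<in> ends f} = {x, y}" "x \<noteq> y"
    using d unfolding graph_degree_def card_2_iff by blast
  have "e = x \<or> e = y" using xy(1) e by blast
  then show ?thesis
  proof
    assume "e = x" then show ?thesis using that[of y] xy by auto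
  next
    assume "e = y" then show ?thesis using that[of x] xy by auto
  qed
qed

lemma ends_arc: "arc e \<Longrightarrow> ends e = {pathstart e, pathfinish e} \<and> pathstart e \<noteq> pathfinish e"
  using arc_distinct_ends by (fastforce simp: ends_def)

lemma topological_graph_edges_closed_subset:
  assumes tg: "topological_graph X E" and F: "F \<subseteq> E" "F \<noteq> {}"
    and closed: "\<And>f g. f \<in> F \<Longrightarrow> g \<in> E \<Longrightarrow> ends f \<inter> ends g \<noteq> {} \<Longrightarrow> g \<in> F"
  shows "F = E"
proof (rule ccontr)
  assume "F \<noteq> E"
  then obtain g where g: "g \<in> E - F" using F(1) by blast
  define K1 where "K1 = (\<Union>f\<in>F. path_image f)"
  define K2 where "K2 = (\<Union>f\<in>E - F. path_image f)"
  have "finite E" "\<And>f. f \<in> E \<Longrightarrow> closed (path_image f)"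
    using topological_graphD(3,5)[OF tg] by (auto intro: closed_path_image arc_imp_path)
  then have cl: "closed K1" "closed K2" unfolding K1_def K2_def using F(1) by (auto intro!: closed_UN
    intro: finite_subset)
  have XK: "X \<subseteq> K1 \<union> K2" unfolding K1_def K2_def using topological_graphD(6)[OF tg] by auto
  have "K1 \<inter> K2 = {}"
  proof (rule ccontr)
    assume "K1 \<inter> K2 \<noteq> {}"
    then obtain z f h where z: "f \<in> F" "h \<in> E - F" "z \<in> path_image f" "z \<in> path_image h"
      unfolding K1_def K2_def by blast
    then have "z \<in> ends f \<inter> ends h" using topological_graphD(7)[OF tg] F(1) by blast
    then show False using closed[of f h] z by blast
  qed
  moreover have "K1 \<inter> X \<noteq> {}" "K2 \<inter> X \<noteq> {}"
    unfolding K1_def K2_def using topological_graphD(6)[OF tg] F g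
    by (auto intro: pathstart_in_path_image)
  ultimately show False using topological_graphD(2)[OF tg] cl XK unfolding connected_closed by blast
qed

lemma two_edge_graph_homeomorphic_S1:
  assumes tg: "topological_graph X E" and deg: "\<forall>v\<in>graph_vertices E. graph_degree E v = 2"
    and e: "e \<in> E" and e': "e' \<in> E" "e' \<noteq> e" and ee: "ends e' = ends e"
  shows "X homeomorphic S1"
proof -
  define a where "a = pathstart e"
  define b where "b = pathfinish e"
  have ae: "arc e" using topological_graphD(5)[OF tg e] .
  have ab: "ends e = {a, b}" "a \<noteq> b" using ends_arc[OF ae] by (auto simp: a_def b_def)
  have incident: "{f\<in>E. v \<in> ends f} = {e, e'}" if v: "v \<in> ends e" for v
  proof -
    have "v \<in> graph_vertices E" using e v unfolding graph_vertices_def by auto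
    then have "graph_degree E v = 2" using deg by blast
    then obtain g where "g \<in> E" "g \<noteq> e" "{f\<in>E. v \<in> ends f} = {e, g}"
      using degree_2_edgesE[OF tg e v] by blast
    moreover have "e' \<in> {f\<in>E. v \<in> ends f}" using e' ee v by auto
    ultimately show ?thesis using e' by auto
  qed
  have EE: "{e, e'} = E"
  proof (rule topological_graph_edges_closed_subset[OF tg])
    show "{e, e'} \<subseteq> E" "{e, e'} \<noteq> {}" using e e' by auto
    show "g \<in> {e, e'}" if "f \<in> {e, e'}" "g \<in> E" "ends f \<inter> ends g \<noteq> {}" for f g
      using that incident ee by blast
  qed
  have ae': "arc e'" using topological_graphD(5)[OF tg e'(1)] .
  have "b \<in> ends e'" using ee ab by auto
  then obtain g where g: "arc g" "pathstart g = b" "path_image g = path_image e'" "ends g = ends e'"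
    using arc_reorient[OF ae'] by blast
  have gf: "pathfinish g = a" using ends_arc[OF g(1)] g(2,4) ee ab by auto
  have int: "path_image e \<inter> path_image g \<subseteq> {pathstart e, pathstart g}"
    using topological_graphD(7)[OF tg e e'(1)] e'(2) g(3) ee ab g(2) by (auto simp: a_def b_def)
  have simple: "simple_path (e +++ g)"
    by (rule simple_path_join_loop[OF ae g(1)]) (use g(2) gf int in \<open>auto simp: a_def b_def\<close>)
  have "X = path_image (e +++ g)"
    using topological_graphD(6)[OF tg] EE path_image_join[of e g] g(2,3) by (auto simp: b_def)
  moreover have "pathfinish (e +++ g) = pathstart (e +++ g)" using gf by (simp add: a_def)
  ultimately show ?thesis using homeomorphic_simple_path_image_circle[OF simple] by auto
qed

lemma topological_graph_replace_edges:
  assumes tg: "topological_graph X E" and e: "e \<in> E" "e' \<in> E"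
    and j: "arc j" "path_image j = path_image e' \<union> path_image e"
    and ends: "ends e \<union> ends e' \<subseteq> insert a (ends j)" and a: "\<forall>f\<in>E - {e, e'}. a \<notin> ends f"
  shows "topological_graph X (insert j (E - {e, e'}))"
proof -
  have Kj: "path_image f \<inter> path_image j \<subseteq> ends f \<inter> ends j" if f: "f \<in> E - {e, e'}" for f
  proof
    fix z assume z: "z \<in> path_image f \<inter> path_image j"
    then have "z \<in> ends f \<inter> ends e' \<or> z \<in> ends f \<inter> ends e"
      using topological_graphD(7)[OF tg] f e j(2) by blast
    then show "z \<in> ends f \<inter> ends j" using ends a f by blast
  qed
  have "X = path_image e \<union> path_image e' \<union> (\<Union>f\<in>E - {e, e'}. path_image f)"
    using topological_graphD(6)[OF tg] e by blast
  then have "X = (\<Union>f\<in>insert j (E - {e, e'}). path_image f)" using j(2) by auto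
  moreover have "path_image f1 \<inter> path_image f2 \<subseteq> ends f1 \<inter> ends f2"
    if "f1 \<in> insert j (E - {e, e'})" "f2 \<in> insert j (E - {e, e'})" "f1 \<noteq> f2" for f1 f2
    using that Kj topological_graphD(7)[OF tg] by blast
  ultimately show ?thesis
    using topological_graphD(1-5)[OF tg] j(1) unfolding topological_graph_def by auto
qed

lemma degree_2_replace_edges:
  assumes deg: "\<forall>v\<in>graph_vertices E. graph_degree E v = 2" and finE: "finite E"
    and e: "e \<in> E" "e' \<in> E" "e' \<noteq> e" and jE: "j \<notin> E"
    and ends: "ends e = {a, b}" "ends e' = {a, c}" "ends j = {c, b}" "a \<noteq> b" "a \<noteq> c" "b \<noteq> c"
    and a: "\<forall>f\<in>E - {e, e'}. a \<notin> ends f"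
  shows "\<forall>w\<in>graph_vertices (insert j (E - {e, e'})). graph_degree (insert j (E - {e, e'})) w = 2"
proof
  fix w assume "w \<in> graph_vertices (insert j (E - {e, e'}))"
  then have wV: "w \<in> graph_vertices E" "w \<noteq> a"
    using a ends e unfolding graph_vertices_def by auto
  define Os where "Os = {f\<in>E - {e, e'}. w \<in> ends f}"
  have finO: "finite Os" using finE by (simp add: Os_def)
  have eO: "e \<notin> Os" "e' \<notin> Os" "j \<notin> Os" using jE by (auto simp: Os_def)
  have S': "{f\<in>insert j (E - {e, e'}). w \<in> ends f} = (if w = b \<or> w = c then insert j Os else Os)"
    using ends by (auto simp: Os_def)
  have S: "{f\<in>E. w \<in> ends f} = (if w = b then insert e Os else if w = c then insert e' Os else Os)"
    using ends wV e by (auto simp: Os_def)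
  have "card {f\<in>E. w \<in> ends f} = 2" using deg wV by (simp add: graph_degree_def)
  then show "graph_degree (insert j (E - {e, e'})) w = 2"
    unfolding graph_degree_def S' using S finO eO ends by (auto split: if_splits)
qed

lemma merge_edges:
  assumes tg: "topological_graph X E" and deg: "\<forall>v\<in>graph_vertices E. graph_degree E v = 2"
    and e: "e \<in> E" and e': "e' \<in> E" "e' \<noteq> e" and Da: "{f\<in>E. pathstart e \<in> ends f} = {e, e'}"
    and ne: "ends e' \<noteq> ends e"
  shows "\<exists>E'. topological_graph X E' \<and> (\<forall>v\<in>graph_vertices E'. graph_degree E' v = 2) \<and> card E' < card E"
proof -
  define a where "a = pathstart e"
  define b where "b = pathfinish e"
  have ae: "arc e" using topological_graphD(5)[OF tg e] .
  have ae': "arc e'" using topological_graphD(5)[OF tg e'(1)] .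
  have ab: "ends e = {a, b}" "a \<noteq> b" using ends_arc[OF ae] by (auto simp: a_def b_def)
  have Da': "{f\<in>E. a \<in> ends f} = {e, e'}" using Da by (simp add: a_def)
  have aee': "a \<in> ends e'" using Da' by blast
  obtain h where h: "arc h" "pathstart h = a" "path_image h = path_image e'" "ends h = ends e'"
    using arc_reorient[OF ae' aee'] by blast
  define c where "c = pathfinish h"
  have ac: "ends e' = {a, c}" "a \<noteq> c" using ends_arc[OF h(1)] h(2,4) by (auto simp: c_def)
  have bc: "b \<noteq> c" using ne ab ac by auto
  define g1 where "g1 = reversepath h"
  have g1: "arc g1" "pathstart g1 = c" "pathfinish g1 = a" "path_image g1 = path_image e'"
    using h arc_reversepath[OF h(1)] by (auto simp: g1_def c_def)
  have int: "path_image g1 \<inter> path_image e \<subseteq> {pathstart e}"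
    using topological_graphD(7)[OF tg e'(1) e e'(2)] g1(4) ab ac bc by (auto simp: a_def)
  define j where "j = g1 +++ e"
  have aj: "arc j" unfolding j_def by (rule arc_join[OF g1(1) ae]) (use g1 int in \<open>auto simp: a_def\<close>)
  have pj: "path_image j = path_image e' \<union> path_image e"
    unfolding j_def using path_image_join[of g1 e] g1 by (simp add: a_def)
  have ej: "ends j = {c, b}" using g1 by (simp add: j_def ends_def b_def)
  have jE: "j \<notin> E"
  proof
    assume jE: "j \<in> E"
    show False
    proof (cases "j = e")
      case True
      then have "path_image e' \<subseteq> path_image e' \<inter> path_image e" using pj by auto
      also have "\<dots> \<subseteq> ends e' \<inter> ends e" using topological_graphD(7)[OF tg e'(1) e e'(2)] .
      finally have "finite (path_image e')" by (rule finite_subset) (simp add: ends_def)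
      then show False using infinite_path_image_arc[OF ae'] by simp
    next
      case False
      then have "path_image e \<subseteq> path_image j \<inter> path_image e" using pj by auto
      also have "\<dots> \<subseteq> ends j \<inter> ends e" using topological_graphD(7)[OF tg jE e False] .
      finally have "finite (path_image e)" by (rule finite_subset) (simp add: ends_def)
      then show False using infinite_path_image_arc[OF ae] by simp
    qed
  qed
  have finE: "finite E" using topological_graphD(3)[OF tg] .
  have "card (insert j (E - {e, e'})) < card E"
  proof -
    have "card {e, e'} \<le> card E" using e e' by (intro card_mono[OF finE]) auto
    then show ?thesis using finE e e' e'(2) jE by (simp add: card_Diff_subset)
  qed
  moreover have aoth: "\<forall>f\<in>E - {e, e'}. a \<notin> ends f" using Da' by blast
  ultimately show ?thesis
    using topological_graph_replace_edges[OF tg e e'(1) aj pj _ aoth]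
      degree_2_replace_edges[OF deg finE e e'(1,2) jE ab(1) ac(1) ej ab(2) ac(2) bc aoth]
      ab(1) ac(1) ej by blast
qed

lemma degree_2_imp_homeomorphic_S1:
  "topological_graph X E \<Longrightarrow> (\<forall>v\<in>graph_vertices E. graph_degree E v = 2) \<Longrightarrow> X homeomorphic S1"
proof (induction "card E" arbitrary: E rule: less_induct)
  case less
  note tg = less.prems(1) and deg = less.prems(2)
  obtain e where e: "e \<in> E" using topological_graphD(4)[OF tg] by blast
  have a: "pathstart e \<in> ends e" by (simp add: ends_def)
  then have "pathstart e \<in> graph_vertices E" using e unfolding graph_vertices_def by blast
  then have "graph_degree E (pathstart e) = 2" using deg by blast
  then obtain e' where e': "e' \<in> E" "e' \<noteq> e" "{f\<in>E. pathstart e \<in> ends f} = {e, e'}"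
    using degree_2_edgesE[OF tg e a] by blast
  show ?case
  proof (cases "ends e' = ends e")
    case True
    then show ?thesis using two_edge_graph_homeomorphic_S1[OF tg deg e e'(1,2)] by blast
  next
    case False
    obtain E' where E': "topological_graph X E'" "\<forall>v\<in>graph_vertices E'. graph_degree E' v = 2" "card E' < card E"
      using merge_edges[OF tg deg e e'(1,2) e'(3) False] by blast
    then show ?thesis using less.hyps by blast
  qed
qed

theorem theorem5p8:
  fixes X :: "'a::metric_space set" and E :: "(real \<Rightarrow> 'a) set"
  assumes "topological_graph X E"
  shows "(X homeomorphic sphere (0::complex) 1 \<longleftrightarrow> P_h X = range enat \<union> {\<infinity>})
       \<and> (P_h X = range enat \<union> {\<infinity>} \<longleftrightarrow> 0 \<in> P_h X)
       \<and> (0 \<in> P_h X \<longleftrightarrow> (\<forall>v\<in>graph_vertices E. graph_degree E v = 2))"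
proof -
  have i12: "X homeomorphic S1 \<Longrightarrow> P_h X = range enat \<union> {\<infinity>}"
    by (rule P_h_homeomorphic_S1)
  have i23: "P_h X = range enat \<union> {\<infinity>} \<Longrightarrow> 0 \<in> P_h X"
    by (simp add: zero_enat_def)
  have i34: "0 \<in> P_h X \<Longrightarrow> (\<forall>v\<in>graph_vertices E. graph_degree E v = 2)"
    by (rule degree_2_if_height_0[OF assms])
  have i41: "(\<forall>v\<in>graph_vertices E. graph_degree E v = 2) \<Longrightarrow> X homeomorphic S1"
    by (rule degree_2_imp_homeomorphic_S1[OF assms])
  show ?thesis using i12 i23 i34 i41 by blast
qed

end
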